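(* Let $D:A\to\mathbf{qPOS}$ be a small diagram with $D(\alpha)=(\mathcal X_\alpha,R_\alpha)$. Let $\mathcal X$ with maps $J_\alpha:\mathcal X\to\mathcal X_\alpha$ be a limit in $\mathbf{qSet}$ of the underlying diagram of quantum sets. Then $R=\bigwedge_{\alpha\in A}J_\alpha^\dagger\circ R_\alpha\circ J_\alpha$ is a partial order on $\mathcal X$ (i.e. $(\mathcal X,R)$ is a quantum poset), and $(\mathcal X,R)$ together with the maps $J_\alpha$ is a limit of $D$ in $\mathbf{qPOS}$.
   Context: A quantum set $\mathcal X$ is a set $\mathrm{At}(\mathcal X)$ of nonzero finite-dimensional Hilbert spaces (atoms). A relation $R$ from $\mathcal X$ to $\mathcal Y$ is a choice of subspaces $R(X,Y)\subseteq L(X,Y)$ for all atoms. Composition: $(S\circ R)(X,Z)=\mathrm{span}\{sr: r\in R(X,Y), s\in S(Y,Z), Y\in\mathrm{At}(\mathcal Y)\}$; identity $I_{\mathcal X}(X,X)=\mathbb C 1_X$ and $0$ off the diagonal; adjoint $R^\dagger(Y,X)=\{r^\dagger: r\in R(X,Y)\}$; $R\le S$ entrywise inclusion; $\bigwedge$ entrywise intersection. A function $F:\mathcal X\to\mathcal Y$ is a relation with $F\circ F^\dagger\le I_{\mathcal Y}$ and $F^\dagger\circ F\ge I_{\mathcal X}$; quantum sets and functions form $\mathbf{qSet}$ (which is complete). A quantum poset is $(\mathcal X,R)$ with $I_{\mathcal X}\le R$, $R\circ R\le R$, $R\wedge R^\dagger\le I_{\mathcal X}$; a monotone map $F:(\mathcal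 X,R)\to(\mathcal Y,S)$ is a function with $F\circ R\le S\circ F$; these form $\mathbf{qPOS}$. *)

theory Defs
  imports Complex_Main "Jordan_Normal_Form.Matrix"
begin

text \<open>An atom is an element of an index type together with its (positive)
dimension; the atom with dimension n is the Hilbert space C^n (every nonzero
finite-dimensional Hilbert space is unitarily isomorphic to one of these), so
L(X,Y) is the space of (dim Y) x (dim X) complex matrices and the adjoint is
the conjugate transpose.\<close>

type_synonym 'a qset = "'a set \<times> ('a \<Rightarrow> nat)"

definition At :: "'a qset \<Rightarrow> 'a set" where "At X = fst X"
definition dm :: "'a qset \<Rightarrow> 'a \<Rightarrow> nat" where "dm X = snd X"

definition qset :: "'a qset \<Rightarrow> bool" where
  "qset X \<longleftrightarrow> (\<forall>a\<in>At X. 0 < dm X a)"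

text \<open>A relation assigns to atoms (a,b) a subspace of L(a,b); by convention it
is the empty set off the atoms, so that equality of relations is literal.\<close>

type_synonym ('a,'b) qrel = "'a \<Rightarrow> 'b \<Rightarrow> complex mat set"

definition mat_subspace :: "nat \<Rightarrow> nat \<Rightarrow> complex mat set \<Rightarrow> bool" where
  "mat_subspace n m S \<longleftrightarrow> S \<subseteq> carrier_mat n m \<and> 0\<^sub>m n m \<in> S
     \<and> (\<forall>x\<in>S. \<forall>y\<in>S. x + y \<in> S) \<and> (\<forall>c x. x \<in> S \<longrightarrow> c \<cdot>\<^sub>m x \<in> S)"

inductive_set mat_span :: "nat \<Rightarrow> nat \<Rightarrow> complex mat set \<Rightarrow> complex mat set"
  for n m S where
  zero: "0\<^sub>m n m \<in> mat_span n m S"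
| step: "x \<in> S \<Longrightarrow> y \<in> mat_span n m S \<Longrightarrow> c \<cdot>\<^sub>m x + y \<in> mat_span n m S"

definition cadj :: "complex mat \<Rightarrow> complex mat" where
  "cadj A = mat (dim_col A) (dim_row A) (\<lambda>(i,j). cnj (A $$ (j,i)))"

definition is_qrel :: "'a qset \<Rightarrow> 'b qset \<Rightarrow> ('a,'b) qrel \<Rightarrow> bool" where
  "is_qrel X Y R \<longleftrightarrow> (\<forall>a b. if a \<in> At X \<and> b \<in> At Y
       then mat_subspace (dm Y b) (dm X a) (R a b) else R a b = {})"

definition qcomp :: "'a qset \<Rightarrow> 'b qset \<Rightarrow> 'c qset \<Rightarrow> ('b,'c) qrel \<Rightarrow> ('a,'b) qrel \<Rightarrow> ('a,'c) qrel" where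
  "qcomp X Y Z S R = (\<lambda>a c. if a \<in> At X \<and> c \<in> At Z then
      mat_span (dm Z c) (dm X a) {s * r | r s b. b \<in> At Y \<and> r \<in> R a b \<and> s \<in> S b c}
    else {})"

definition qid :: "'a qset \<Rightarrow> ('a,'a) qrel" where
  "qid X = (\<lambda>a a'. if a \<in> At X \<and> a' \<in> At X then
      (if a = a' then {c \<cdot>\<^sub>m 1\<^sub>m (dm X a) | c. True} else {0\<^sub>m (dm X a') (dm X a)})
    else {})"

definition qadj :: "('a,'b) qrel \<Rightarrow> ('b,'a) qrel" where
  "qadj R = (\<lambda>b a. cadj ` R a b)"

definition qle :: "('a,'b) qrel \<Rightarrow> ('a,'b) qrel \<Rightarrow> bool" where
  "qle R S \<longleftrightarrow> (\<forall>a b. R a b \<subseteq> S a b)"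

definition qinf :: "('a,'b) qrel \<Rightarrow> ('a,'b) qrel \<Rightarrow> ('a,'b) qrel" where
  "qinf R S = (\<lambda>a b. R a b \<inter> S a b)"

text \<open>Meet of a family of relations X -> Y indexed by I (top relation if I is empty).\<close>
definition qMeet :: "'a qset \<Rightarrow> 'b qset \<Rightarrow> 'o set \<Rightarrow> ('o \<Rightarrow> ('a,'b) qrel) \<Rightarrow> ('a,'b) qrel" where
  "qMeet X Y I Rs = (\<lambda>a b. if a \<in> At X \<and> b \<in> At Y then
      carrier_mat (dm Y b) (dm X a) \<inter> (\<Inter>i\<in>I. Rs i a b) else {})"

definition qfun :: "'a qset \<Rightarrow> 'b qset \<Rightarrow> ('a,'b) qrel \<Rightarrow> bool" where
  "qfun X Y F \<longleftrightarrow> is_qrel X Y F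
     \<and> qle (qcomp Y X Y F (qadj F)) (qid Y)
     \<and> qle (qid X) (qcomp X Y X (qadj F) F)"

definition qposet :: "'a qset \<Rightarrow> ('a,'a) qrel \<Rightarrow> bool" where
  "qposet X R \<longleftrightarrow> qset X \<and> is_qrel X X R \<and> qle (qid X) R \<and> qle (qcomp X X X R R) R
     \<and> qle (qinf R (qadj R)) (qid X)"

definition qmono :: "'a qset \<Rightarrow> ('a,'a) qrel \<Rightarrow> 'b qset \<Rightarrow> ('b,'b) qrel \<Rightarrow> ('a,'b) qrel \<Rightarrow> bool" where
  "qmono X R Y S F \<longleftrightarrow> qfun X Y F \<and> qle (qcomp X X Y F R) (qcomp X Y Y S F)"

definition small_category ::
  "'o set \<Rightarrow> 'm set \<Rightarrow> ('m \<Rightarrow> 'o) \<Rightarrow> ('m \<Rightarrow> 'o) \<Rightarrow> ('m \<Rightarrow> 'm \<Rightarrow> 'm) \<Rightarrow> ('o \<Rightarrow> 'm) \<Rightarrow> bool" where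
  "small_category Ob Ar src tgt cmp idA \<longleftrightarrow>
     (\<forall>f\<in>Ar. src f \<in> Ob \<and> tgt f \<in> Ob)
   \<and> (\<forall>x\<in>Ob. idA x \<in> Ar \<and> src (idA x) = x \<and> tgt (idA x) = x)
   \<and> (\<forall>f\<in>Ar. \<forall>g\<in>Ar. tgt f = src g \<longrightarrow>
        cmp g f \<in> Ar \<and> src (cmp g f) = src f \<and> tgt (cmp g f) = tgt g)
   \<and> (\<forall>f\<in>Ar. cmp f (idA (src f)) = f \<and> cmp (idA (tgt f)) f = f)
   \<and> (\<forall>f\<in>Ar. \<forall>g\<in>Ar. \<forall>h\<in>Ar. tgt f = src g \<and> tgt g = src h \<longrightarrow>
        cmp h (cmp g f) = cmp (cmp h g) f)"

definition qpos_diagram ::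
  "'o set \<Rightarrow> 'm set \<Rightarrow> ('m \<Rightarrow> 'o) \<Rightarrow> ('m \<Rightarrow> 'o) \<Rightarrow> ('m \<Rightarrow> 'm \<Rightarrow> 'm) \<Rightarrow> ('o \<Rightarrow> 'm)
   \<Rightarrow> ('o \<Rightarrow> 'b qset) \<Rightarrow> ('o \<Rightarrow> ('b,'b) qrel) \<Rightarrow> ('m \<Rightarrow> ('b,'b) qrel) \<Rightarrow> bool" where
  "qpos_diagram Ob Ar src tgt cmp idA DX DR DF \<longleftrightarrow>
     (\<forall>x\<in>Ob. qposet (DX x) (DR x))
   \<and> (\<forall>f\<in>Ar. qmono (DX (src f)) (DR (src f)) (DX (tgt f)) (DR (tgt f)) (DF f))
   \<and> (\<forall>x\<in>Ob. DF (idA x) = qid (DX x))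
   \<and> (\<forall>f\<in>Ar. \<forall>g\<in>Ar. tgt f = src g \<longrightarrow>
        DF (cmp g f) = qcomp (DX (src f)) (DX (tgt f)) (DX (tgt g)) (DF g) (DF f))"

definition qset_cone ::
  "'o set \<Rightarrow> 'm set \<Rightarrow> ('m \<Rightarrow> 'o) \<Rightarrow> ('m \<Rightarrow> 'o) \<Rightarrow> ('o \<Rightarrow> 'b qset) \<Rightarrow> ('m \<Rightarrow> ('b,'b) qrel)
   \<Rightarrow> 'y qset \<Rightarrow> ('o \<Rightarrow> ('y,'b) qrel) \<Rightarrow> bool" where
  "qset_cone Ob Ar src tgt DX DF Y K \<longleftrightarrow>
     (\<forall>x\<in>Ob. qfun Y (DX x) (K x))
   \<and> (\<forall>f\<in>Ar. qcomp Y (DX (src f)) (DX (tgt f)) (DF f) (K (src f)) = K (tgt f))"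

text \<open>Limit in qSet. Test objects (other cones) range over quantum sets whose
atoms are indexed by the type 'y (passed as TYPE('y)).\<close>
definition qset_limit ::
  "'y itself \<Rightarrow> 'o set \<Rightarrow> 'm set \<Rightarrow> ('m \<Rightarrow> 'o) \<Rightarrow> ('m \<Rightarrow> 'o) \<Rightarrow> ('o \<Rightarrow> 'b qset) \<Rightarrow> ('m \<Rightarrow> ('b,'b) qrel)
   \<Rightarrow> 'x qset \<Rightarrow> ('o \<Rightarrow> ('x,'b) qrel) \<Rightarrow> bool" where
  "qset_limit (_ :: 'y itself) Ob Ar src tgt DX DF X J \<longleftrightarrow>
     qset X \<and> qset_cone Ob Ar src tgt DX DF X J
   \<and> (\<forall>(Y :: 'y qset) K. qset Y \<and> qset_cone Ob Ar src tgt DX DF Y K \<longrightarrow>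
        (\<exists>!F. qfun Y X F \<and> (\<forall>x\<in>Ob. qcomp Y X (DX x) (J x) F = K x)))"

definition qpos_cone ::
  "'o set \<Rightarrow> 'm set \<Rightarrow> ('m \<Rightarrow> 'o) \<Rightarrow> ('m \<Rightarrow> 'o) \<Rightarrow> ('o \<Rightarrow> 'b qset) \<Rightarrow> ('o \<Rightarrow> ('b,'b) qrel)
   \<Rightarrow> ('m \<Rightarrow> ('b,'b) qrel) \<Rightarrow> 'y qset \<Rightarrow> ('y,'y) qrel \<Rightarrow> ('o \<Rightarrow> ('y,'b) qrel) \<Rightarrow> bool" where
  "qpos_cone Ob Ar src tgt DX DR DF Y S K \<longleftrightarrow>
     (\<forall>x\<in>Ob. qmono Y S (DX x) (DR x) (K x))
   \<and> (\<forall>f\<in>Ar. qcomp Y (DX (src f)) (DX (tgt f)) (DF f) (K (src f)) = K (tgt f))"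

definition qpos_limit ::
  "'y itself \<Rightarrow> 'o set \<Rightarrow> 'm set \<Rightarrow> ('m \<Rightarrow> 'o) \<Rightarrow> ('m \<Rightarrow> 'o) \<Rightarrow> ('o \<Rightarrow> 'b qset)
   \<Rightarrow> ('o \<Rightarrow> ('b,'b) qrel) \<Rightarrow> ('m \<Rightarrow> ('b,'b) qrel)
   \<Rightarrow> 'x qset \<Rightarrow> ('x,'x) qrel \<Rightarrow> ('o \<Rightarrow> ('x,'b) qrel) \<Rightarrow> bool" where
  "qpos_limit (_ :: 'y itself) Ob Ar src tgt DX DR DF X R J \<longleftrightarrow>
     qposet X R \<and> qpos_cone Ob Ar src tgt DX DR DF X R J
   \<and> (\<forall>(Y :: 'y qset) S K. qposet Y S \<and> qpos_cone Ob Ar src tgt DX DR DF Y S K \<longrightarrow>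
        (\<exists>!F. qmono Y S X R F \<and> (\<forall>x\<in>Ob. qcomp Y X (DX x) (J x) F = K x)))"

end

theory Submission
  imports Defs "Jordan_Normal_Form.Schur_Decomposition"
begin

(* Each pullback J\<^sub>\<alpha>\<^sup>\<dagger> R\<^sub>\<alpha> J\<^sub>\<alpha> of a preorder along a function is a preorder, and so is any
   meet of preorders. A function F into X is monotone for R as soon as every J\<^sub>\<alpha> F is monotone,
   so the universal property in qSet gives the universal property in qPOS.

   Antisymmetry is the substantial part. T = R \<and> R\<^sup>\<dagger> is an equivalence relation, and
   antisymmetry of each R\<^sub>\<alpha> gives J\<^sub>\<alpha> T \<le> J\<^sub>\<alpha>. If T \<le> I failed, T would contain a nonzero
   multiple e of a unitary with e \<notin> I: either a reflection 1 - 2p, where p is a spectral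
   projection of a non-scalar self-adjoint element of one of the *-algebras T(a,a), or, if all
   of these are scalar, an element m \<notin> I of some T(a,b), for which m\<^sup>\<dagger>m and mm\<^sup>\<dagger> are then
   scalars. Such an e yields two distinct functions F, G from a single atom into X with
   G \<le> T F, hence J\<^sub>\<alpha> G \<le> J\<^sub>\<alpha> F and so J\<^sub>\<alpha> G = J\<^sub>\<alpha> F for all \<alpha>, contradicting that the legs
   of a limit are jointly monic. *)

section \<open>Hermitian matrices\<close>

lemma cadj_dims[simp]: "dim_row (cadj A) = dim_col A" "dim_col (cadj A) = dim_row A"
  unfolding cadj_def by simp_all

lemma cadj_index[simp]: "i < dim_col A \<Longrightarrow> j < dim_row A \<Longrightarrow> cadj A $$ (i,j) = cnj (A $$ (j,i))"
  unfolding cadj_def by (simp add: index_mat)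

lemma cadj_carrier[simp]: "A \<in> carrier_mat n m \<Longrightarrow> cadj A \<in> carrier_mat m n"
  unfolding carrier_mat_def by simp

lemma cadj_cadj[simp]: "cadj (cadj A) = A"
  by (rule eq_matI) simp_all

lemma cadj_mult: assumes "A \<in> carrier_mat n k" "B \<in> carrier_mat k m"
  shows "cadj (A * B) = cadj B * cadj A"
proof (rule eq_matI)
  fix i j assume i: "i < dim_row (cadj B * cadj A)" and j: "j < dim_col (cadj B * cadj A)"
  have ii: "i < m" and jj: "j < n" using i j assms by auto
  have "cadj (A * B) $$ (i,j) = cnj (\<Sum>l<k. A $$ (j,l) * B $$ (l,i))"
    using assms ii jj by (simp add: scalar_prod_def atLeast0LessThan)
  also have "\<dots> = (\<Sum>l<k. cnj (B $$ (l,i)) * cnj (A $$ (j,l)))"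
    by (simp add: mult.commute)
  also have "\<dots> = (cadj B * cadj A) $$ (i,j)"
    using assms ii jj by (simp add: scalar_prod_def atLeast0LessThan)
  finally show "cadj (A * B) $$ (i,j) = (cadj B * cadj A) $$ (i,j)" .
next
  show "dim_row (cadj (A * B)) = dim_row (cadj B * cadj A)" by simp
next
  show "dim_col (cadj (A * B)) = dim_col (cadj B * cadj A)" by simp
qed

lemma cadj_add: assumes "A \<in> carrier_mat n m" "B \<in> carrier_mat n m"
  shows "cadj (A + B) = cadj A + cadj B"
  using assms by (intro eq_matI) simp_all

lemma cadj_minus: assumes "A \<in> carrier_mat n m" "B \<in> carrier_mat n m"
  shows "cadj (A - B) = cadj A - cadj B"
  using assms by (intro eq_matI) simp_all

lemma cadj_smult[simp]: "cadj (c \<cdot>\<^sub>m A) = cnj c \<cdot>\<^sub>m cadj A"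
  by (intro eq_matI) simp_all

lemma cadj_zero[simp]: "cadj (0\<^sub>m n m) = 0\<^sub>m m n"
  by (intro eq_matI) simp_all

lemma cadj_one[simp]: "cadj (1\<^sub>m n) = 1\<^sub>m n"
  by (intro eq_matI) (simp_all add: one_mat_def)

lemma zero_scal: "0\<^sub>m n n = (0::complex) \<cdot>\<^sub>m 1\<^sub>m n" by (rule eq_matI) auto

lemma one_scal: "1\<^sub>m n = (1::complex) \<cdot>\<^sub>m 1\<^sub>m n" by (rule eq_matI) auto

definition mat_trace :: "complex mat \<Rightarrow> complex" where "mat_trace M = (\<Sum>k<dim_row M. M $$ (k,k))"

lemma mat_trace_mult_comm: assumes A: "A \<in> carrier_mat n m" and B: "B \<in> carrier_mat m n"
  shows "mat_trace (A * B) = mat_trace (B * A)"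
proof -
  have "mat_trace (A * B) = (\<Sum>k<n. \<Sum>l<m. A $$ (k,l) * B $$ (l,k))"
    unfolding mat_trace_def using A B by (simp add: scalar_prod_def atLeast0LessThan)
  also have "\<dots> = (\<Sum>l<m. \<Sum>k<n. B $$ (l,k) * A $$ (k,l))"
    by (subst sum.swap) (simp add: mult.commute)
  also have "\<dots> = mat_trace (B * A)"
    unfolding mat_trace_def using A B by (simp add: scalar_prod_def atLeast0LessThan)
  finally show ?thesis .
qed

lemma upper_triangular_mult: assumes X: "X \<in> carrier_mat n n" and Y: "Y \<in> carrier_mat n n"
  and ux: "upper_triangular X" and uy: "upper_triangular Y"
  shows "upper_triangular (X * Y)" "\<And>k. k < n \<Longrightarrow> (X * Y) $$ (k,k) = X $$ (k,k) * Y $$ (k,k)"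
proof -
  show "upper_triangular (X * Y)"
  proof (rule upper_triangularI)
    fix i j assume ji: "j < i" and i: "i < dim_row (X * Y)"
    have "(X * Y) $$ (i,j) = (\<Sum>l<n. X $$ (i,l) * Y $$ (l,j))"
      using X Y ji i by (simp add: scalar_prod_def atLeast0LessThan)
    also have "\<dots> = 0"
    proof (rule sum.neutral, intro ballI)
      fix l assume l: "l \<in> {..<n}"
      show "X $$ (i,l) * Y $$ (l,j) = 0"
      proof (cases "l < i")
        case True then show ?thesis using upper_triangularD[OF ux True] i X by simp
      next
        case False then have "j < l" using ji by simp
        then show ?thesis using upper_triangularD[OF uy] l Y by simp
      qed
    qed
    finally show "(X * Y) $$ (i,j) = 0" .
  qed
next
  fix k assume k: "k < n"
  have e1: "(X * Y) $$ (k,k) = (\<Sum>l<n. X $$ (k,l) * Y $$ (l,k))"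
    using X Y k by (simp add: scalar_prod_def atLeast0LessThan)
  have z: "\<forall>l\<in>{..<n} - {k}. X $$ (k,l) * Y $$ (l,k) = 0"
  proof
    fix l assume l: "l \<in> {..<n} - {k}"
    show "X $$ (k,l) * Y $$ (l,k) = 0"
    proof (cases "l < k")
      case True then show ?thesis using upper_triangularD[OF ux True] k X by simp
    next
      case False then have "k < l" using l by simp
      then show ?thesis using upper_triangularD[OF uy] l Y by simp
    qed
  qed
  have "(X * Y) $$ (k,k) = (\<Sum>l\<in>{k}. X $$ (k,l) * Y $$ (l,k))" unfolding e1
    by (rule sum.mono_neutral_right) (use k z in auto)
  also have "\<dots> = X $$ (k,k) * Y $$ (k,k)" by simp
  finally show "(X * Y) $$ (k,k) = X $$ (k,k) * Y $$ (k,k)" .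
qed

lemma hermitian_trace_square_zero:
  assumes Z: "Z \<in> carrier_mat n n" and h: "cadj Z = Z" and t: "mat_trace (Z * Z) = 0"
  shows "Z = 0\<^sub>m n n"
proof -
  have Zij: "\<And>i j. i < n \<Longrightarrow> j < n \<Longrightarrow> Z $$ (j,i) = cnj (Z $$ (i,j))"
  proof -
    fix i j assume "i < n" "j < n"
    then have "cadj Z $$ (j,i) = cnj (Z $$ (i,j))" using Z by simp
    then show "Z $$ (j,i) = cnj (Z $$ (i,j))" using h by simp
  qed
  have "mat_trace (Z * Z) = (\<Sum>i<n. \<Sum>j<n. Z $$ (i,j) * Z $$ (j,i))"
    unfolding mat_trace_def using Z by (simp add: scalar_prod_def atLeast0LessThan)
  also have "\<dots> = (\<Sum>i<n. \<Sum>j<n. complex_of_real ((cmod (Z $$ (i,j)))\<^sup>2))"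
  proof (intro sum.cong refl)
    fix i j assume "i \<in> {..<n}" "j \<in> {..<n}"
    then have "Z $$ (j,i) = cnj (Z $$ (i,j))" using Zij by blast
    then show "Z $$ (i,j) * Z $$ (j,i) = complex_of_real ((cmod (Z $$ (i,j)))\<^sup>2)"
      using complex_norm_square[of "Z $$ (i,j)"] by simp
  qed
  also have "\<dots> = complex_of_real (\<Sum>i<n. \<Sum>j<n. (cmod (Z $$ (i,j)))\<^sup>2)" by (simp only: of_real_sum)
  finally have "complex_of_real (\<Sum>i<n. \<Sum>j<n. (cmod (Z $$ (i,j)))\<^sup>2) = 0" using t by simp
  then have "(\<Sum>i<n. \<Sum>j<n. (cmod (Z $$ (i,j)))\<^sup>2) = 0" by (simp only: of_real_eq_0_iff)
  then have "\<forall>i\<in>{..<n}. (\<Sum>j<n. (cmod (Z $$ (i,j)))\<^sup>2) = 0"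
    by (subst (asm) sum_nonneg_eq_0_iff) (auto intro: sum_nonneg)
  then have "\<forall>i<n. \<forall>j<n. (cmod (Z $$ (i,j)))\<^sup>2 = 0"
    by (auto simp: sum_nonneg_eq_0_iff)
  then show ?thesis using Z by (intro eq_matI) auto
qed

lemma hermitian_quadratic_form_real: fixes a :: "complex mat"
  assumes a: "a \<in> carrier_mat n n" and h: "cadj a = a" and v: "v \<in> carrier_vec n"
  shows "cnj (\<Sum>i<n. cnj (v $ i) * (a *\<^sub>v v) $ i) = (\<Sum>i<n. cnj (v $ i) * (a *\<^sub>v v) $ i)"
proof -
  have aij: "a $$ (j,i) = cnj (a $$ (i,j))" if "i < n" "j < n" for i j
    using that a h cadj_index[of j a i] by simp
  define s where "s = (\<Sum>i<n. cnj (v $ i) * (a *\<^sub>v v) $ i)"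
  have s1: "s = (\<Sum>i<n. \<Sum>j<n. cnj (v $ i) * a $$ (i,j) * v $ j)"
    unfolding s_def using a v by (simp add: scalar_prod_def atLeast0LessThan sum_distrib_left mult.assoc)
  have "cnj s = (\<Sum>i<n. \<Sum>j<n. v $ i * cnj (a $$ (i,j)) * cnj (v $ j))"
    unfolding s1 by simp
  also have "\<dots> = (\<Sum>i<n. \<Sum>j<n. v $ i * a $$ (j,i) * cnj (v $ j))"
  proof (intro sum.cong refl)
    fix i j assume "i \<in> {..<n}" "j \<in> {..<n}"
    then show "v $ i * cnj (a $$ (i,j)) * cnj (v $ j) = v $ i * a $$ (j,i) * cnj (v $ j)"
      using aij[of i j] by simp
  qed
  also have "\<dots> = (\<Sum>j<n. \<Sum>i<n. cnj (v $ j) * a $$ (j,i) * v $ i)"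
    by (subst sum.swap) (simp add: ac_simps)
  also have "\<dots> = s" unfolding s1 by simp
  finally show ?thesis unfolding s_def .
qed

lemma hermitian_eigenvalue_real: fixes a :: "complex mat"
  assumes a: "a \<in> carrier_mat n n" and h: "cadj a = a" and ev: "eigenvalue a e"
  shows "cnj e = e"
proof -
  obtain v where v: "eigenvector a v e" using ev unfolding eigenvalue_def by blast
  have vc: "v \<in> carrier_vec n" and v0: "v \<noteq> 0\<^sub>v n" and av: "a *\<^sub>v v = e \<cdot>\<^sub>v v"
    using v a unfolding eigenvector_def by auto
  define N where "N = (\<Sum>i<n. (cmod (v $ i))\<^sup>2)"
  have "(\<Sum>i<n. cnj (v $ i) * (a *\<^sub>v v) $ i) = (\<Sum>i<n. e * complex_of_real ((cmod (v $ i))\<^sup>2))"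
    unfolding av
  proof (intro sum.cong refl)
    fix i assume "i \<in> {..<n}"
    then have "(e \<cdot>\<^sub>v v) $ i = e * v $ i" using vc by simp
    then show "cnj (v $ i) * (e \<cdot>\<^sub>v v) $ i = e * complex_of_real ((cmod (v $ i))\<^sup>2)"
      using complex_norm_square[of "v $ i"] by (simp add: ac_simps)
  qed
  also have "\<dots> = e * complex_of_real N" unfolding N_def by (simp add: sum_distrib_left)
  finally have "cnj (e * complex_of_real N) = e * complex_of_real N"
    using hermitian_quadratic_form_real[OF a h vc] by simp
  moreover have "N \<noteq> 0"
  proof
    assume "N = 0"
    then have "\<forall>i<n. (cmod (v $ i))\<^sup>2 = 0" unfolding N_def by (auto simp: sum_nonneg_eq_0_iff)
    then have "v = 0\<^sub>v n" using vc by (intro eq_vecI) auto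
    with v0 show False by simp
  qed
  ultimately show ?thesis by simp
qed

fun prod_shifts :: "complex mat \<Rightarrow> nat \<Rightarrow> complex list \<Rightarrow> complex mat" where
  "prod_shifts a n [] = 1\<^sub>m n"
| "prod_shifts a n (l # ls) = (a - l \<cdot>\<^sub>m 1\<^sub>m n) * prod_shifts a n ls"

lemma smult_one_carrier: "l \<cdot>\<^sub>m 1\<^sub>m n \<in> carrier_mat n n" by simp

lemma prod_shifts_carrier: "a \<in> carrier_mat n n \<Longrightarrow> prod_shifts a n ls \<in> carrier_mat n n"
  by (induct ls) (auto intro!: mult_carrier_mat minus_carrier_mat)

lemma minus_smult_one: fixes a :: "complex mat" assumes "a \<in> carrier_mat n n"
  shows "a - l \<cdot>\<^sub>m 1\<^sub>m n = a + (- l) \<cdot>\<^sub>m 1\<^sub>m n"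
  using assms by (intro eq_matI) auto

lemma smult_one_mult: fixes X :: "complex mat" assumes "X \<in> carrier_mat n m"
  shows "(l \<cdot>\<^sub>m 1\<^sub>m n) * X = l \<cdot>\<^sub>m X"
  using mult_smult_assoc_mat[OF one_carrier_mat assms] assms by simp

lemma mult_smult_one: fixes X :: "complex mat" assumes "X \<in> carrier_mat m n"
  shows "X * (l \<cdot>\<^sub>m 1\<^sub>m n) = l \<cdot>\<^sub>m X"
  using mult_smult_distrib[OF assms one_carrier_mat] assms by simp

lemma commute_minus_smult_one:
  fixes a M :: "complex mat"
  assumes a: "a \<in> carrier_mat n n" and M: "M \<in> carrier_mat n n"
  and c: "a * M = M * a"
  shows "(a - l \<cdot>\<^sub>m 1\<^sub>m n) * M = M * (a - l \<cdot>\<^sub>m 1\<^sub>m n)"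
proof -
  have "(a - l \<cdot>\<^sub>m 1\<^sub>m n) * M = a * M - (l \<cdot>\<^sub>m 1\<^sub>m n) * M"
    by (rule minus_mult_distrib_mat[OF a smult_one_carrier M])
  also have "\<dots> = a * M - l \<cdot>\<^sub>m M" using smult_one_mult[OF M] by simp
  also have "\<dots> = M * a - M * (l \<cdot>\<^sub>m 1\<^sub>m n)" using mult_smult_one[OF M] c by simp
  also have "\<dots> = M * (a - l \<cdot>\<^sub>m 1\<^sub>m n)"
    by (rule mult_minus_distrib_mat[OF M a smult_one_carrier, symmetric])
  finally show ?thesis .
qed

lemma prod_shifts_commute: fixes a :: "complex mat" assumes a: "a \<in> carrier_mat n n"
  shows "a * prod_shifts a n ls = prod_shifts a n ls * a"
proof (induct ls)
  case Nil then show ?case using a by simp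
next
  case (Cons l ls)
  have M: "prod_shifts a n ls \<in> carrier_mat n n" by (rule prod_shifts_carrier[OF a])
  have L: "a - l \<cdot>\<^sub>m 1\<^sub>m n \<in> carrier_mat n n" using a by (simp add: minus_carrier_mat)
  have aL: "a * (a - l \<cdot>\<^sub>m 1\<^sub>m n) = (a - l \<cdot>\<^sub>m 1\<^sub>m n) * a"
    using commute_minus_smult_one[OF a a refl] by simp
  have "a * prod_shifts a n (l # ls) = (a * (a - l \<cdot>\<^sub>m 1\<^sub>m n)) * prod_shifts a n ls"
    using assoc_mult_mat[OF a L M] by simp
  also have "\<dots> = (a - l \<cdot>\<^sub>m 1\<^sub>m n) * (a * prod_shifts a n ls)"
    unfolding aL using assoc_mult_mat[OF L a M] by simp
  also have "\<dots> = ((a - l \<cdot>\<^sub>m 1\<^sub>m n) * prod_shifts a n ls) * a"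
    unfolding Cons using assoc_mult_mat[OF L M a] by simp
  finally show ?case by simp
qed

lemma cadj_minus_smult_one:
  fixes a :: "complex mat"
  assumes a: "a \<in> carrier_mat n n" and h: "cadj a = a"
  and l: "cnj l = l"
  shows "cadj (a - l \<cdot>\<^sub>m 1\<^sub>m n) = a - l \<cdot>\<^sub>m 1\<^sub>m n"
  using cadj_minus[OF a smult_one_carrier] h l by simp

lemma prod_shifts_hermitian:
  fixes a :: "complex mat"
  assumes a: "a \<in> carrier_mat n n" and h: "cadj a = a"
  and r: "\<forall>l\<in>set ls. cnj l = l"
  shows "cadj (prod_shifts a n ls) = prod_shifts a n ls"
  using r
proof (induct ls)
  case Nil then show ?case by simp
next
  case (Cons l ls)
  have M: "prod_shifts a n ls \<in> carrier_mat n n" by (rule prod_shifts_carrier[OF a])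
  have L: "a - l \<cdot>\<^sub>m 1\<^sub>m n \<in> carrier_mat n n" using a by (simp add: minus_carrier_mat)
  have "cadj (prod_shifts a n (l # ls)) = cadj (prod_shifts a n ls) * cadj (a - l \<cdot>\<^sub>m 1\<^sub>m n)"
    using cadj_mult[OF L M] by simp
  also have "\<dots> = prod_shifts a n ls * (a - l \<cdot>\<^sub>m 1\<^sub>m n)"
    using Cons cadj_minus_smult_one[OF a h] by simp
  also have "\<dots> = (a - l \<cdot>\<^sub>m 1\<^sub>m n) * prod_shifts a n ls"
    by (rule commute_minus_smult_one[OF a M prod_shifts_commute[OF a], symmetric])
  finally show ?case by simp
qed

lemma prod_shifts_closed: fixes a :: "complex mat" assumes a: "a \<in> carrier_mat n n"
  and A: "a \<in> A" "1\<^sub>m n \<in> A" "\<forall>x\<in>A. \<forall>y\<in>A. x * y \<in> A" "\<forall>x\<in>A. \<forall>y\<in>A. x + y \<in> A"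
    "\<forall>c. \<forall>x\<in>A. c \<cdot>\<^sub>m x \<in> A"
  shows "prod_shifts a n ls \<in> A"
proof (induct ls)
  case Nil then show ?case using A by simp
next
  case (Cons l ls)
  have "a - l \<cdot>\<^sub>m 1\<^sub>m n \<in> A" unfolding minus_smult_one[OF a] using A by blast
  then show ?case using Cons A by simp
qed

lemma similar_mult: fixes P Q X Y :: "complex mat"
  assumes P: "P \<in> carrier_mat n n" and Q: "Q \<in> carrier_mat n n" and X: "X \<in> carrier_mat n n"
    and Y: "Y \<in> carrier_mat n n" and QP: "Q * P = 1\<^sub>m n"
  shows "(P * X * Q) * (P * Y * Q) = P * (X * Y) * Q"
proof -
  have "(P * X * Q) * (P * Y * Q) = P * X * (Q * (P * Y * Q))"
    using assoc_mult_mat[of "P * X" n n Q n "P * Y * Q" n] P X Q Y by simp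
  also have "Q * (P * Y * Q) = (Q * P) * Y * Q"
    using P Q Y by (simp add: assoc_mult_mat[of _ n n _ n _ n])
  also have "\<dots> = Y * Q" using QP Y by simp
  also have "P * X * (Y * Q) = P * (X * Y) * Q"
    using P X Y Q by (simp add: assoc_mult_mat[of _ n n _ n _ n])
  finally show ?thesis .
qed

lemma prod_shifts_similar: fixes a B P Q :: "complex mat"
  assumes a: "a \<in> carrier_mat n n" and B: "B \<in> carrier_mat n n" and P: "P \<in> carrier_mat n n"
    and Q: "Q \<in> carrier_mat n n" and PQ: "P * Q = 1\<^sub>m n" and QP: "Q * P = 1\<^sub>m n" and aB: "a = P * B * Q"
  shows "prod_shifts a n ls = P * prod_shifts B n ls * Q"
proof (induct ls)
  case Nil then show ?case using P PQ by simp
next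
  case (Cons l ls)
  have MB: "prod_shifts B n ls \<in> carrier_mat n n" by (rule prod_shifts_carrier[OF B])
  have LB: "B - l \<cdot>\<^sub>m 1\<^sub>m n \<in> carrier_mat n n" using B by (simp add: minus_carrier_mat)
  have "P * (B - l \<cdot>\<^sub>m 1\<^sub>m n) * Q = (P * B - P * (l \<cdot>\<^sub>m 1\<^sub>m n)) * Q"
    using mult_minus_distrib_mat[OF P B smult_one_carrier] by simp
  also have "\<dots> = P * B * Q - P * (l \<cdot>\<^sub>m 1\<^sub>m n) * Q"
    using minus_mult_distrib_mat[of "P * B" n n "P * (l \<cdot>\<^sub>m 1\<^sub>m n)" Q n] P B Q by simp
  also have "P * (l \<cdot>\<^sub>m 1\<^sub>m n) * Q = l \<cdot>\<^sub>m 1\<^sub>m n"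
    using mult_smult_one[OF P] mult_smult_assoc_mat[OF P Q] PQ by simp
  finally have L: "a - l \<cdot>\<^sub>m 1\<^sub>m n = P * (B - l \<cdot>\<^sub>m 1\<^sub>m n) * Q" using aB by simp
  show ?case unfolding prod_shifts.simps L Cons by (rule similar_mult[OF P Q LB MB QP])
qed

lemma minus_smult_one_upper_triangular:
  fixes B :: "complex mat"
  assumes B: "B \<in> carrier_mat n n" and u: "upper_triangular B"
  shows "upper_triangular (B - l \<cdot>\<^sub>m 1\<^sub>m n)" "\<And>k. k < n \<Longrightarrow> (B - l \<cdot>\<^sub>m 1\<^sub>m n) $$ (k,k) = B $$ (k,k) - l"
  using B upper_triangularD[OF u] by (auto intro!: upper_triangularI)

lemma prod_shifts_upper_triangular:
  fixes B :: "complex mat"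
  assumes B: "B \<in> carrier_mat n n" and u: "upper_triangular B"
  shows "upper_triangular (prod_shifts B n ls)
    \<and> (\<forall>k<n. prod_shifts B n ls $$ (k,k) = prod_list (map (\<lambda>l. B $$ (k,k) - l) ls))"
proof (induct ls)
  case Nil then show ?case by simp
next
  case (Cons l ls)
  have MB: "prod_shifts B n ls \<in> carrier_mat n n" by (rule prod_shifts_carrier[OF B])
  have LB: "B - l \<cdot>\<^sub>m 1\<^sub>m n \<in> carrier_mat n n" using B by (simp add: minus_carrier_mat)
  note U = upper_triangular_mult[OF LB MB minus_smult_one_upper_triangular(1)[OF B u] conjunct1[OF Cons]]
  show ?case using U Cons minus_smult_one_upper_triangular(2)[OF B u] by simp
qed

lemma prod_shifts_eigen:
  fixes a X :: "complex mat"
  assumes a: "a \<in> carrier_mat n n" and X: "X \<in> carrier_mat n m"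
  and aX: "a * X = \<mu> \<cdot>\<^sub>m X"
  shows "prod_shifts a n ls * X = prod_list (map (\<lambda>l. \<mu> - l) ls) \<cdot>\<^sub>m X"
proof (induct ls)
  case Nil
  have "1\<^sub>m n * X = X" using X by simp
  also have "X = 1 \<cdot>\<^sub>m X" using X by (intro eq_matI) auto
  finally show ?case by simp
next
  case (Cons l ls)
  have M: "prod_shifts a n ls \<in> carrier_mat n n" by (rule prod_shifts_carrier[OF a])
  have L: "a - l \<cdot>\<^sub>m 1\<^sub>m n \<in> carrier_mat n n" using a by (simp add: minus_carrier_mat)
  define c where "c = prod_list (map (\<lambda>l. \<mu> - l) ls)"
  have "(a - l \<cdot>\<^sub>m 1\<^sub>m n) * X = a * X - (l \<cdot>\<^sub>m 1\<^sub>m n) * X"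
    by (rule minus_mult_distrib_mat[OF a smult_one_carrier X])
  also have "\<dots> = (\<mu> - l) \<cdot>\<^sub>m X" unfolding aX smult_one_mult[OF X] using X by (intro eq_matI) (auto simp: algebra_simps)
  finally have LX: "(a - l \<cdot>\<^sub>m 1\<^sub>m n) * X = (\<mu> - l) \<cdot>\<^sub>m X" .
  have "prod_shifts a n (l # ls) * X = (a - l \<cdot>\<^sub>m 1\<^sub>m n) * (prod_shifts a n ls * X)"
    using assoc_mult_mat[OF L M X] by simp
  also have "\<dots> = (a - l \<cdot>\<^sub>m 1\<^sub>m n) * (c \<cdot>\<^sub>m X)" unfolding Cons c_def ..
  also have "\<dots> = c \<cdot>\<^sub>m ((\<mu> - l) \<cdot>\<^sub>m X)" using mult_smult_distrib[OF L X] LX by simp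
  also have "\<dots> = ((\<mu> - l) * c) \<cdot>\<^sub>m X" using X by (intro eq_matI) auto
  finally show ?case unfolding c_def by simp
qed

lemma cnj_prod_real: "\<forall>l\<in>set ls. cnj l = l \<Longrightarrow> cnj \<mu> = \<mu> \<Longrightarrow>
  cnj (prod_list (map (\<lambda>l. \<mu> - l) ls)) = prod_list (map (\<lambda>l. \<mu> - l) ls)"
  by (induct ls) auto

lemma similar_cancel: fixes P Q M :: "complex mat"
  assumes P: "P \<in> carrier_mat n n" and Q: "Q \<in> carrier_mat n n" and M: "M \<in> carrier_mat n n"
    and QP: "Q * P = 1\<^sub>m n"
  shows "Q * (P * M * Q) * P = M"
proof -
  have "Q * (P * M * Q) * P = (Q * P) * M * (Q * P)"
    using P Q M by (simp add: assoc_mult_mat[of _ n n _ n _ n])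
  then show ?thesis using QP M by simp
qed

lemma minus_eq_zero_mat:
  fixes X Y :: "complex mat"
  assumes "X \<in> carrier_mat n m" "Y \<in> carrier_mat n m"
  and "X - Y = 0\<^sub>m n m" shows "X = Y"
proof (rule eq_matI)
  fix i j assume i: "i < dim_row Y" and j: "j < dim_col Y"
  have "(X - Y) $$ (i,j) = X $$ (i,j) - Y $$ (i,j)" using i j assms(1,2) by simp
  moreover have "(X - Y) $$ (i,j) = 0" by (subst assms(3)) (use i j assms(2) in simp)
  ultimately show "X $$ (i,j) = Y $$ (i,j)" by simp
qed (use assms in auto)

lemma triangularization:
  fixes a :: "complex mat" assumes a: "a \<in> carrier_mat n n"
  obtains B P Q where "B \<in> carrier_mat n n" "P \<in> carrier_mat n n" "Q \<in> carrier_mat n n"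
    "P * Q = 1\<^sub>m n" "Q * P = 1\<^sub>m n" "a = P * B * Q" "upper_triangular B"
    "\<And>k. k < n \<Longrightarrow> eigenvalue a (B $$ (k,k))"
proof -
  obtain es where cp: "char_poly a = (\<Prod>e\<leftarrow>es. [:- e, 1:])" and les: "length es = n"
    using char_poly_factorized[OF a] by blast
  obtain B P Q where sd: "schur_decomposition a es = (B,P,Q)" by (cases "schur_decomposition a es") auto
  have sch: "similar_mat_wit a B P Q \<and> upper_triangular B \<and> diag_mat B = es"
    by (rule schur_decomposition[OF a cp sd])
  have dr: "dim_row a = n" using a by simp
  have B: "B \<in> carrier_mat n n" and "P \<in> carrier_mat n n" "Q \<in> carrier_mat n n"
    "P * Q = 1\<^sub>m n" "Q * P = 1\<^sub>m n" "a = P * B * Q"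
    using sch unfolding similar_mat_wit_def Let_def dr by auto
  moreover have "eigenvalue a (B $$ (k,k))" if k: "k < n" for k
  proof -
    have "diag_mat B ! k = B $$ (k,k)" unfolding diag_mat_def using B k by simp
    then have "es ! k = B $$ (k,k)" using sch by simp
    then have "B $$ (k,k) \<in> set es" using k les nth_mem by metis
    then have "poly (char_poly a) (B $$ (k,k)) = 0"
      unfolding cp by (auto simp: poly_prod_list o_def prod_list_zero_iff)
    then show ?thesis using eigenvalue_root_char_poly[OF a] by simp
  qed
  ultimately show ?thesis using that sch by blast
qed

text \<open>The product is Hermitian and similar to a triangular matrix with zero diagonal, so the
  trace of its square vanishes.\<close>
lemma prod_shifts_hermitian_vanish:
  fixes a :: "complex mat"
  assumes a: "a \<in> carrier_mat n n" and h: "cadj a = a"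
    and B: "B \<in> carrier_mat n n" and P: "P \<in> carrier_mat n n" and Q: "Q \<in> carrier_mat n n"
    and PQ: "P * Q = 1\<^sub>m n" and QP: "Q * P = 1\<^sub>m n" and aPBQ: "a = P * B * Q" and uB: "upper_triangular B"
    and roots: "\<And>k. k < n \<Longrightarrow> B $$ (k,k) \<in> set L" and real: "\<forall>l\<in>set L. cnj l = l"
  shows "prod_shifts a n L = 0\<^sub>m n n"
proof -
  define Z where "Z = prod_shifts a n L"
  define N where "N = prod_shifts B n L"
  have Zc: "Z \<in> carrier_mat n n" unfolding Z_def by (rule prod_shifts_carrier[OF a])
  have Nc: "N \<in> carrier_mat n n" unfolding N_def by (rule prod_shifts_carrier[OF B])
  have ZN: "Z = P * N * Q" unfolding Z_def N_def by (rule prod_shifts_similar[OF a B P Q PQ QP aPBQ])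
  have Nu: "upper_triangular N" and Nd: "\<forall>k<n. N $$ (k,k) = prod_list (map (\<lambda>l. B $$ (k,k) - l) L)"
    using prod_shifts_upper_triangular[OF B uB, of L] unfolding N_def by auto
  have Nd0: "N $$ (k,k) = 0" if k: "k < n" for k
  proof -
    have "0 \<in> set (map (\<lambda>l. B $$ (k,k) - l) L)" using roots[OF k] by force
    then show "N $$ (k,k) = 0" using Nd k by (simp add: prod_list_zero_iff)
  qed
  have NN: "N * N \<in> carrier_mat n n" using Nc by simp
  have "mat_trace (Z * Z) = mat_trace (P * (N * N) * Q)"
    unfolding ZN by (simp add: similar_mult[OF P Q Nc Nc QP])
  also have "\<dots> = mat_trace (Q * (P * (N * N)))" by (rule mat_trace_mult_comm[OF mult_carrier_mat[OF P NN] Q])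
  also have "Q * (P * (N * N)) = N * N"
    using assoc_mult_mat[OF Q P NN, symmetric] QP left_mult_one_mat[OF NN] by simp
  also have "mat_trace (N * N) = (\<Sum>k<n. N $$ (k,k) * N $$ (k,k))"
    unfolding mat_trace_def using upper_triangular_mult(2)[OF Nc Nc Nu Nu] Nc by simp
  also have "\<dots> = 0" using Nd0 by simp
  finally have "mat_trace (Z * Z) = 0" .
  moreover have "cadj Z = Z" unfolding Z_def by (rule prod_shifts_hermitian[OF a h real])
  ultimately show ?thesis using hermitian_trace_square_zero[OF Zc] unfolding Z_def by blast
qed

lemma smult_mat_cancel: fixes X Y :: "complex mat"
  assumes "X \<in> carrier_mat n m" "Y \<in> carrier_mat n m" "c \<noteq> 0" "c \<cdot>\<^sub>m X = c \<cdot>\<^sub>m Y"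
  shows "X = Y"
proof (rule eq_matI)
  fix i j assume "i < dim_row Y" "j < dim_col Y"
  then have "c * X $$ (i,j) = c * Y $$ (i,j)" using assms by (metis index_smult_mat(1) carrier_matD)
  then show "X $$ (i,j) = Y $$ (i,j)" using assms(3) by simp
qed (use assms in auto)

lemma hermitian_projection_of_scaled_idempotent: fixes q :: "complex mat"
  assumes q: "q \<in> carrier_mat n n" and qq: "q * q = c \<cdot>\<^sub>m q" and qh: "cadj q = q"
    and c0: "c \<noteq> 0" and cr: "cnj c = c"
  shows "((1 / c) \<cdot>\<^sub>m q) * ((1 / c) \<cdot>\<^sub>m q) = (1 / c) \<cdot>\<^sub>m q" and "cadj ((1 / c) \<cdot>\<^sub>m q) = (1 / c) \<cdot>\<^sub>m q"
proof -
  have "((1 / c) \<cdot>\<^sub>m q) * ((1 / c) \<cdot>\<^sub>m q) = (1 / c) \<cdot>\<^sub>m (q * ((1 / c) \<cdot>\<^sub>m q))"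
    by (rule mult_smult_assoc_mat[OF q smult_carrier_mat[OF q]])
  also have "q * ((1 / c) \<cdot>\<^sub>m q) = (1 / c) \<cdot>\<^sub>m (q * q)" by (rule mult_smult_distrib[OF q q])
  also have "(1 / c) \<cdot>\<^sub>m ((1 / c) \<cdot>\<^sub>m (q * q)) = (1 / c) \<cdot>\<^sub>m q"
    unfolding qq using q c0 by (intro eq_matI) auto
  finally show "((1 / c) \<cdot>\<^sub>m q) * ((1 / c) \<cdot>\<^sub>m q) = (1 / c) \<cdot>\<^sub>m q" .
  show "cadj ((1 / c) \<cdot>\<^sub>m q) = (1 / c) \<cdot>\<^sub>m q" using qh cr by (simp add: complex_cnj_divide)
qed

lemma hermitian_prod_shifts_eigenspace:
  fixes a :: "complex mat"
  assumes a: "a \<in> carrier_mat n n" and h: "cadj a = a" and n0: "n \<noteq> 0"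
  obtains l L where "\<forall>x\<in>set L. cnj x = x" "cnj l = l" "l \<notin> set L"
    "a * prod_shifts a n L = l \<cdot>\<^sub>m prod_shifts a n L" "prod_shifts a n L \<noteq> 0\<^sub>m n n"
proof -
  obtain B P Q where B: "B \<in> carrier_mat n n" and P: "P \<in> carrier_mat n n" and Q: "Q \<in> carrier_mat n n"
    and PQ: "P * Q = 1\<^sub>m n" and QP: "Q * P = 1\<^sub>m n" and aPBQ: "a = P * B * Q" and uB: "upper_triangular B"
    and ev: "\<And>k. k < n \<Longrightarrow> eigenvalue a (B $$ (k,k))"
    using triangularization[OF a] by blast
  define es where "es = map (\<lambda>k. B $$ (k,k)) [0..<n]"
  have real: "\<forall>e\<in>set es. cnj e = e" unfolding es_def using hermitian_eigenvalue_real[OF a h ev] by auto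
  define l where "l = B $$ (0,0)"
  have les: "l \<in> set es" unfolding l_def es_def using n0 by simp
  define L where "L = filter (\<lambda>x. x \<noteq> l) es"
  define q where "q = prod_shifts a n L"
  have qc: "q \<in> carrier_mat n n" unfolding q_def by (rule prod_shifts_carrier[OF a])
  have "prod_shifts a n (l # L) = 0\<^sub>m n n"
    by (rule prod_shifts_hermitian_vanish[OF a h B P Q PQ QP aPBQ uB])
       (use real les in \<open>auto simp: L_def es_def\<close>)
  then have "a * q - l \<cdot>\<^sub>m q = 0\<^sub>m n n"
    using minus_mult_distrib_mat[OF a smult_one_carrier qc] smult_one_mult[OF qc] unfolding q_def by simp
  then have aq: "a * q = l \<cdot>\<^sub>m q"
    by (rule minus_eq_zero_mat[OF mult_carrier_mat[OF a qc] smult_carrier_mat[OF qc]])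
  have "q \<noteq> 0\<^sub>m n n"
  proof
    assume q0: "q = 0\<^sub>m n n"
    have M: "prod_shifts B n L \<in> carrier_mat n n" by (rule prod_shifts_carrier[OF B])
    have "prod_shifts B n L = Q * q * P" unfolding q_def prod_shifts_similar[OF a B P Q PQ QP aPBQ, of L]
      by (rule similar_cancel[OF P Q M QP, symmetric])
    then have "prod_shifts B n L $$ (0,0) = 0" using q0 P Q n0 by simp
    moreover have "prod_shifts B n L $$ (0,0) = prod_list (map (\<lambda>x. l - x) L)"
      using prod_shifts_upper_triangular[OF B uB, of L] n0 unfolding l_def by simp
    ultimately show False unfolding L_def prod_list_zero_iff by auto
  qed
  moreover have "\<forall>x\<in>set L. cnj x = x" "cnj l = l" "l \<notin> set L" unfolding L_def using real les by auto
  ultimately show ?thesis using that aq unfolding q_def by blast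
qed

lemma hermitian_nonscalar_projection:
  fixes a :: "complex mat"
  assumes a: "a \<in> carrier_mat n n" and h: "cadj a = a" and ns: "\<forall>c. a \<noteq> c \<cdot>\<^sub>m 1\<^sub>m n"
  and A: "a \<in> A" "1\<^sub>m n \<in> A" "\<forall>x\<in>A. \<forall>y\<in>A. x * y \<in> A" "\<forall>x\<in>A. \<forall>y\<in>A. x + y \<in> A"
    "\<forall>c. \<forall>x\<in>A. c \<cdot>\<^sub>m x \<in> A"
  shows "\<exists>p\<in>A. p * p = p \<and> cadj p = p \<and> p \<noteq> 0\<^sub>m n n \<and> p \<noteq> 1\<^sub>m n"
proof -
  have n0: "n \<noteq> 0"
  proof
    assume "n = 0"
    then have "a = 0 \<cdot>\<^sub>m 1\<^sub>m n" using a by (intro eq_matI) auto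
    with ns show False by blast
  qed
  obtain l L where realL: "\<forall>x\<in>set L. cnj x = x" and reall: "cnj l = l" and lL: "l \<notin> set L"
    and aq: "a * prod_shifts a n L = l \<cdot>\<^sub>m prod_shifts a n L" and q0: "prod_shifts a n L \<noteq> 0\<^sub>m n n"
    by (rule hermitian_prod_shifts_eigenspace[OF a h n0])
  define q where "q = prod_shifts a n L"
  have qc: "q \<in> carrier_mat n n" unfolding q_def by (rule prod_shifts_carrier[OF a])
  define c where "c = prod_list (map (\<lambda>x. l - x) L)"
  have c0: "c \<noteq> 0" unfolding c_def prod_list_zero_iff using lL by auto
  have qq: "q * q = c \<cdot>\<^sub>m q" unfolding c_def using prod_shifts_eigen[OF a qc aq[folded q_def], of L] q_def by simp
  have qh: "cadj q = q" unfolding q_def by (rule prod_shifts_hermitian[OF a h realL])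
  have cr: "cnj c = c" unfolding c_def by (rule cnj_prod_real[OF realL reall])
  define p where "p = (1 / c) \<cdot>\<^sub>m q"
  have pp: "p * p = p" and ph: "cadj p = p"
    unfolding p_def by (rule hermitian_projection_of_scaled_idempotent[OF qc qq qh c0 cr])+
  have pA: "p \<in> A" unfolding p_def q_def using prod_shifts_closed[OF a A] A(5) by blast
  have qcp: "q = c \<cdot>\<^sub>m p" unfolding p_def using qc c0 by (intro eq_matI) auto
  have "p \<noteq> 0\<^sub>m n n" using q0 qcp qc unfolding q_def by auto
  moreover have "p \<noteq> 1\<^sub>m n"
  proof
    assume "p = 1\<^sub>m n"
    then have "c \<cdot>\<^sub>m a = c \<cdot>\<^sub>m (l \<cdot>\<^sub>m 1\<^sub>m n)"
      using aq[folded q_def] qcp mult_smult_one[OF a] by (auto intro!: eq_matI simp: ac_simps)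
    then have "a = l \<cdot>\<^sub>m 1\<^sub>m n" by (rule smult_mat_cancel[OF a smult_one_carrier c0])
    with ns show False by blast
  qed
  ultimately show ?thesis using pA pp ph by blast
qed

lemma hermitian_parts: fixes m :: "complex mat" assumes mc: "m \<in> carrier_mat n n"
  shows "cadj ((1/2) \<cdot>\<^sub>m (m + cadj m)) = (1/2) \<cdot>\<^sub>m (m + cadj m)"
    "cadj ((- \<i>/2) \<cdot>\<^sub>m m + (\<i>/2) \<cdot>\<^sub>m cadj m) = (- \<i>/2) \<cdot>\<^sub>m m + (\<i>/2) \<cdot>\<^sub>m cadj m"
    "m = (1/2) \<cdot>\<^sub>m (m + cadj m) + \<i> \<cdot>\<^sub>m ((- \<i>/2) \<cdot>\<^sub>m m + (\<i>/2) \<cdot>\<^sub>m cadj m)"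
proof -
  have d: "dim_row m = n" "dim_col m = n" using mc by auto
  show "cadj ((1/2) \<cdot>\<^sub>m (m + cadj m)) = (1/2) \<cdot>\<^sub>m (m + cadj m)"
  proof (rule eq_matI)
    fix i j assume "i < dim_row ((1/2) \<cdot>\<^sub>m (m + cadj m))" "j < dim_col ((1/2) \<cdot>\<^sub>m (m + cadj m))"
    then have i: "i < n" and j: "j < n" using d by auto
    show "cadj ((1/2) \<cdot>\<^sub>m (m + cadj m)) $$ (i,j) = ((1/2) \<cdot>\<^sub>m (m + cadj m)) $$ (i,j)"
      using i j d by (simp add: algebra_simps)
  qed (use d in simp_all)
  show "cadj ((- \<i>/2) \<cdot>\<^sub>m m + (\<i>/2) \<cdot>\<^sub>m cadj m) = (- \<i>/2) \<cdot>\<^sub>m m + (\<i>/2) \<cdot>\<^sub>m cadj m"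
  proof (rule eq_matI)
    fix i j assume "i < dim_row ((- \<i>/2) \<cdot>\<^sub>m m + (\<i>/2) \<cdot>\<^sub>m cadj m)" "j < dim_col ((- \<i>/2) \<cdot>\<^sub>m m + (\<i>/2) \<cdot>\<^sub>m cadj m)"
    then have i: "i < n" and j: "j < n" using d by auto
    show "cadj ((- \<i>/2) \<cdot>\<^sub>m m + (\<i>/2) \<cdot>\<^sub>m cadj m) $$ (i,j) = ((- \<i>/2) \<cdot>\<^sub>m m + (\<i>/2) \<cdot>\<^sub>m cadj m) $$ (i,j)"
      using i j d by (simp add: algebra_simps)
  qed (use d in simp_all)
  show "m = (1/2) \<cdot>\<^sub>m (m + cadj m) + \<i> \<cdot>\<^sub>m ((- \<i>/2) \<cdot>\<^sub>m m + (\<i>/2) \<cdot>\<^sub>m cadj m)"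
  proof (rule eq_matI)
    fix i j assume "i < dim_row (((1/2) \<cdot>\<^sub>m (m + cadj m) + \<i> \<cdot>\<^sub>m ((- \<i>/2) \<cdot>\<^sub>m m + (\<i>/2) \<cdot>\<^sub>m cadj m)))"
      "j < dim_col (((1/2) \<cdot>\<^sub>m (m + cadj m) + \<i> \<cdot>\<^sub>m ((- \<i>/2) \<cdot>\<^sub>m m + (\<i>/2) \<cdot>\<^sub>m cadj m)))"
    then have i: "i < n" and j: "j < n" using d by auto
    show "m $$ (i,j) = ((1/2) \<cdot>\<^sub>m (m + cadj m) + \<i> \<cdot>\<^sub>m ((- \<i>/2) \<cdot>\<^sub>m m + (\<i>/2) \<cdot>\<^sub>m cadj m)) $$ (i,j)"
      using i j d by (simp add: algebra_simps)
  qed (use d in simp_all)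
qed

lemma cadj_mult_self_zero: fixes m :: "complex mat" assumes m: "m \<in> carrier_mat k l"
  and z: "cadj m * m = 0\<^sub>m l l" shows "m = 0\<^sub>m k l"
proof (rule eq_matI)
  fix i j assume i: "i < dim_row (0\<^sub>m k l)" and j: "j < dim_col (0\<^sub>m k l)"
  have "(cadj m * m) $$ (j,j) = (\<Sum>t<k. cnj (m $$ (t,j)) * m $$ (t,j))"
    using m i j by (simp add: scalar_prod_def atLeast0LessThan)
  also have "\<dots> = (\<Sum>t<k. complex_of_real ((cmod (m $$ (t,j)))\<^sup>2))"
  proof (intro sum.cong refl)
    fix t show "cnj (m $$ (t,j)) * m $$ (t,j) = complex_of_real ((cmod (m $$ (t,j)))\<^sup>2)"
      using complex_norm_square[of "m $$ (t,j)"] by (simp add: mult.commute)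
  qed
  also have "\<dots> = complex_of_real (\<Sum>t<k. (cmod (m $$ (t,j)))\<^sup>2)" by (simp only: of_real_sum)
  finally have "complex_of_real (\<Sum>t<k. (cmod (m $$ (t,j)))\<^sup>2) = 0"
    using z i j by simp
  then have "(\<Sum>t<k. (cmod (m $$ (t,j)))\<^sup>2) = 0" by (simp only: of_real_eq_0_iff)
  then have "\<forall>t<k. (cmod (m $$ (t,j)))\<^sup>2 = 0" by (auto simp: sum_nonneg_eq_0_iff)
  then show "m $$ (i,j) = 0\<^sub>m k l $$ (i,j)" using i j by simp
qed (use m in auto)

lemma reflection_of_projection:
  fixes p :: "complex mat"
  assumes p: "p \<in> carrier_mat n n" and pp: "p * p = p"
  shows "(1\<^sub>m n + (-2) \<cdot>\<^sub>m p) * (1\<^sub>m n + (-2) \<cdot>\<^sub>m p) = 1\<^sub>m n"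
proof -
  define q where "q = (-2) \<cdot>\<^sub>m p"
  have q: "q \<in> carrier_mat n n" unfolding q_def using p by simp
  have "q * q = (-2) \<cdot>\<^sub>m (p * ((-2) \<cdot>\<^sub>m p))"
    unfolding q_def by (rule mult_smult_assoc_mat[OF p smult_carrier_mat[OF p]])
  also have "p * ((-2) \<cdot>\<^sub>m p) = (-2) \<cdot>\<^sub>m (p * p)" by (rule mult_smult_distrib[OF p p])
  finally have qq: "q * q = (-2) \<cdot>\<^sub>m q" unfolding pp q_def .
  have "(1\<^sub>m n + q) * (1\<^sub>m n + q) = 1\<^sub>m n * (1\<^sub>m n + q) + q * (1\<^sub>m n + q)"
    by (rule add_mult_distrib_mat[OF one_carrier_mat q add_carrier_mat[OF q]])
  also have "\<dots> = (1\<^sub>m n + q) + (q * 1\<^sub>m n + q * q)"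
    using mult_add_distrib_mat[OF q one_carrier_mat q] q by simp
  also have "\<dots> = 1\<^sub>m n" unfolding qq using q by (simp, intro eq_matI, auto)
  finally show ?thesis unfolding q_def .
qed

lemma reflection_nonscalar: fixes p :: "complex mat"
  assumes pc: "p \<in> carrier_mat n n" and pp: "p * p = p" and p0: "p \<noteq> 0\<^sub>m n n" and p1: "p \<noteq> 1\<^sub>m n"
  shows "1\<^sub>m n + (-2) \<cdot>\<^sub>m p \<noteq> k \<cdot>\<^sub>m 1\<^sub>m n"
proof
  assume ek: "1\<^sub>m n + (-2) \<cdot>\<^sub>m p = k \<cdot>\<^sub>m 1\<^sub>m n"
  define t where "t = (1 - k) / 2"
  have pk: "p = t \<cdot>\<^sub>m 1\<^sub>m n"
  proof (rule eq_matI)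
    fix i j assume "i < dim_row (t \<cdot>\<^sub>m 1\<^sub>m n)" "j < dim_col (t \<cdot>\<^sub>m 1\<^sub>m n)"
    then have ij: "i < n" "j < n" by auto
    have "(1\<^sub>m n + (-2) \<cdot>\<^sub>m p) $$ (i,j) = (k \<cdot>\<^sub>m 1\<^sub>m n) $$ (i,j)" unfolding ek ..
    then have "1\<^sub>m n $$ (i,j) - 2 * p $$ (i,j) = k * 1\<^sub>m n $$ (i,j)"
      using ij pc by (simp del: index_one_mat(1))
    then show "p $$ (i,j) = (t \<cdot>\<^sub>m 1\<^sub>m n) $$ (i,j)"
      using ij unfolding t_def by (simp del: index_one_mat(1) add: field_simps)
  qed (use pc in auto)
  have npos: "0 < n"
  proof (rule ccontr)
    assume "\<not> 0 < n"
    then have "p = 0\<^sub>m n n" using pc by (intro eq_matI) auto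
    with p0 show False by simp
  qed
  have "p * p = t \<cdot>\<^sub>m (t \<cdot>\<^sub>m 1\<^sub>m n)" unfolding pk
    by (rule smult_one_mult[OF smult_carrier_mat[OF one_carrier_mat]])
  then have "(p * p) $$ (0,0) = t * t" using npos by simp
  moreover have "p $$ (0,0) = t" unfolding pk using npos by simp
  ultimately have "t * t = t" using pp by simp
  then have "t = 0 \<or> t = 1" by (metis mult_cancel_right2 mult_zero_left)
  then show False using p0 p1 pk by (auto simp: zero_scal[symmetric] one_scal[symmetric])
qed

lemma star_algebra_nonscalar_hermitian:
  fixes A :: "complex mat set"
  assumes Ac: "A \<subseteq> carrier_mat n n" and Aa: "\<forall>x\<in>A. \<forall>y\<in>A. x + y \<in> A"
    and As: "\<forall>c. \<forall>x\<in>A. c \<cdot>\<^sub>m x \<in> A" and Aadj: "\<forall>x\<in>A. cadj x \<in> A"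
    and m: "m \<in> A" and ns: "\<forall>c. m \<noteq> c \<cdot>\<^sub>m 1\<^sub>m n"
  shows "\<exists>h\<in>A. cadj h = h \<and> (\<forall>c. h \<noteq> c \<cdot>\<^sub>m 1\<^sub>m n)"
proof (rule ccontr)
  assume scalar: "\<not> (\<exists>h\<in>A. cadj h = h \<and> (\<forall>c. h \<noteq> c \<cdot>\<^sub>m 1\<^sub>m n))"
  have mc: "m \<in> carrier_mat n n" using m Ac by blast
  define h1 where "h1 = (1/2) \<cdot>\<^sub>m (m + cadj m)"
  define h2 where "h2 = (- \<i>/2) \<cdot>\<^sub>m m + (\<i>/2) \<cdot>\<^sub>m cadj m"
  have "h1 \<in> A" "h2 \<in> A" unfolding h1_def h2_def using m Aa As Aadj by blast+
  moreover have "cadj h1 = h1" "cadj h2 = h2" unfolding h1_def h2_def by (rule hermitian_parts[OF mc])+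
  ultimately obtain c1 c2 where c1: "h1 = c1 \<cdot>\<^sub>m 1\<^sub>m n" and c2: "h2 = c2 \<cdot>\<^sub>m 1\<^sub>m n" using scalar by blast
  have "m = h1 + \<i> \<cdot>\<^sub>m h2" unfolding h1_def h2_def by (rule hermitian_parts(3)[OF mc])
  also have "\<dots> = (c1 + \<i> * c2) \<cdot>\<^sub>m 1\<^sub>m n" unfolding c1 c2 by (intro eq_matI) (auto simp: algebra_simps)
  finally show False using ns by blast
qed

text \<open>The reflection 1 - 2p in a spectral projection p of a non-scalar self-adjoint element
  is a non-scalar self-adjoint unitary.\<close>
lemma star_algebra_nonscalar_reflection:
  fixes A :: "complex mat set"
  assumes Ac: "A \<subseteq> carrier_mat n n" and A1: "1\<^sub>m n \<in> A"
    and Am: "\<forall>x\<in>A. \<forall>y\<in>A. x * y \<in> A" and Aa: "\<forall>x\<in>A. \<forall>y\<in>A. x + y \<in> A"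
    and As: "\<forall>c. \<forall>x\<in>A. c \<cdot>\<^sub>m x \<in> A" and Aadj: "\<forall>x\<in>A. cadj x \<in> A"
    and m: "m \<in> A" and ns: "\<forall>c. m \<noteq> c \<cdot>\<^sub>m 1\<^sub>m n"
  shows "\<exists>e\<in>A. cadj e = e \<and> e * e = 1\<^sub>m n \<and> (\<forall>c. e \<noteq> c \<cdot>\<^sub>m 1\<^sub>m n)"
proof -
  obtain h where hA: "h \<in> A" and hh: "cadj h = h" and hns: "\<forall>c. h \<noteq> c \<cdot>\<^sub>m 1\<^sub>m n"
    using star_algebra_nonscalar_hermitian[OF Ac Aa As Aadj m ns] by blast
  have hc: "h \<in> carrier_mat n n" using hA Ac by blast
  obtain p where pA: "p \<in> A" and pp: "p * p = p" and ph: "cadj p = p" and p0: "p \<noteq> 0\<^sub>m n n"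
    and p1: "p \<noteq> 1\<^sub>m n"
    using hermitian_nonscalar_projection[OF hc hh hns hA A1 Am Aa As] by blast
  have pc: "p \<in> carrier_mat n n" using pA Ac by blast
  have "1\<^sub>m n + (-2) \<cdot>\<^sub>m p \<in> A" using A1 pA Aa As by blast
  moreover have "cadj (1\<^sub>m n + (-2) \<cdot>\<^sub>m p) = 1\<^sub>m n + (-2) \<cdot>\<^sub>m p"
    using pc ph cadj_add[OF one_carrier_mat smult_carrier_mat[OF pc]] by simp
  ultimately show ?thesis
    using reflection_of_projection[OF pc pp] reflection_nonscalar[OF pc pp p0 p1] by blast
qed

section \<open>Quantum relations\<close>

lemma mat_span_carrier: assumes "S \<subseteq> carrier_mat n m" "x \<in> mat_span n m S"
  shows "x \<in> carrier_mat n m"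
  using assms(2) by induct (use assms(1) in auto)

lemma mat_subspaceD: assumes "mat_subspace n m V"
  shows "V \<subseteq> carrier_mat n m" "0\<^sub>m n m \<in> V" "x \<in> V \<Longrightarrow> y \<in> V \<Longrightarrow> x + y \<in> V"
    "x \<in> V \<Longrightarrow> c \<cdot>\<^sub>m x \<in> V"
  using assms unfolding mat_subspace_def by auto

lemma mat_span_least: assumes "mat_subspace n m V" "S \<subseteq> V"
  shows "mat_span n m S \<subseteq> V"
proof
  fix x assume "x \<in> mat_span n m S"
  then show "x \<in> V"
    by induct (use assms mat_subspaceD[OF assms(1)] in blast)+
qed

lemma mat_span_inc: assumes "S \<subseteq> carrier_mat n m" "x \<in> S"
  shows "x \<in> mat_span n m S"
proof -
  have "1 \<cdot>\<^sub>m x + 0\<^sub>m n m \<in> mat_span n m S" by (rule mat_span.step[OF assms(2) mat_span.zero])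
  moreover have "1 \<cdot>\<^sub>m x + 0\<^sub>m n m = x" using assms by (intro eq_matI) auto
  ultimately show ?thesis by simp
qed

lemma mat_span_add:
  assumes S: "S \<subseteq> carrier_mat n m" and x: "x \<in> mat_span n m S" and y: "y \<in> mat_span n m S"
  shows "x + y \<in> mat_span n m S"
  using x
proof induct
  case zero
  have "y \<in> carrier_mat n m" using mat_span_carrier[OF S y] .
  then show ?case using y by simp
next
  case (step s x c)
  have s: "s \<in> carrier_mat n m" using step S by auto
  have xc: "x \<in> carrier_mat n m" using mat_span_carrier[OF S step(2)] .
  have yc: "y \<in> carrier_mat n m" using mat_span_carrier[OF S y] .
  have "c \<cdot>\<^sub>m s + x + y = c \<cdot>\<^sub>m s + (x + y)" using assoc_add_mat[OF smult_carrier_mat[OF s] xc yc] .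
  then show ?case using mat_span.step[OF step(1) step(3)] by simp
qed

lemma mat_span_smult: assumes S: "S \<subseteq> carrier_mat n m" and x: "x \<in> mat_span n m S"
  shows "k \<cdot>\<^sub>m x \<in> mat_span n m S"
  using x
proof induct
  case zero
  then show ?case using mat_span.zero by simp
next
  case (step s x c)
  have s: "s \<in> carrier_mat n m" using step S by auto
  have xc: "x \<in> carrier_mat n m" using mat_span_carrier[OF S step(2)] .
  have "k \<cdot>\<^sub>m (c \<cdot>\<^sub>m s + x) = (k * c) \<cdot>\<^sub>m s + k \<cdot>\<^sub>m x"
    using s xc by (intro eq_matI) (auto simp: algebra_simps)
  then show ?case using mat_span.step[OF step(1) step(3)] by simp
qed

lemma mat_span_subspace: assumes "S \<subseteq> carrier_mat n m"
  shows "mat_subspace n m (mat_span n m S)"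
  unfolding mat_subspace_def using mat_span_carrier[OF assms] mat_span_add[OF assms] mat_span_smult[OF assms]
    mat_span.zero by blast

lemma mat_span_mono: assumes "S \<subseteq> S'" shows "mat_span n m S \<subseteq> mat_span n m S'"
proof
  fix x assume "x \<in> mat_span n m S" then show "x \<in> mat_span n m S'"
    by induct (use assms in \<open>auto intro: mat_span.intros\<close>)
qed

lemma mat_span_image_in_subspace:
  assumes S: "S \<subseteq> carrier_mat n m" and V: "mat_subspace n' m' V"
    and f0: "f (0\<^sub>m n m) \<in> V"
    and fstep: "\<And>s y c. s \<in> S \<Longrightarrow> y \<in> carrier_mat n m \<Longrightarrow> f y \<in> V \<Longrightarrow> f (c \<cdot>\<^sub>m s + y) \<in> V"
    and x: "x \<in> mat_span n m S"
  shows "f x \<in> V"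
  using x
proof induct
  case zero then show ?case using f0 .
next
  case (step s y c) then show ?case using fstep mat_span_carrier[OF S] by blast
qed

lemma qrelD: "is_qrel X Y R \<Longrightarrow> a \<in> At X \<Longrightarrow> b \<in> At Y \<Longrightarrow> mat_subspace (dm Y b) (dm X a) (R a b)"
  unfolding is_qrel_def by metis

lemma qrel_off: "is_qrel X Y R \<Longrightarrow> \<not> (a \<in> At X \<and> b \<in> At Y) \<Longrightarrow> R a b = {}"
  unfolding is_qrel_def by metis

lemma qrel_mem: assumes "is_qrel X Y R" "r \<in> R a b"
  shows "a \<in> At X" "b \<in> At Y" "r \<in> carrier_mat (dm Y b) (dm X a)"
proof -
  show a: "a \<in> At X" and b: "b \<in> At Y" using qrel_off[OF assms(1), of a b] assms(2) by auto
  show "r \<in> carrier_mat (dm Y b) (dm X a)" using mat_subspaceD(1)[OF qrelD[OF assms(1) a b]] assms(2) by auto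
qed

lemma qrel_zero: "is_qrel X Y R \<Longrightarrow> a \<in> At X \<Longrightarrow> b \<in> At Y \<Longrightarrow> 0\<^sub>m (dm Y b) (dm X a) \<in> R a b"
  by (rule mat_subspaceD(2)[OF qrelD])

lemma qrel_add: assumes "is_qrel X Y R" "x \<in> R a b" "y \<in> R a b" shows "x + y \<in> R a b"
  by (rule mat_subspaceD(3)[OF qrelD[OF assms(1) qrel_mem(1,2)[OF assms(1,2)]] assms(2,3)])

lemma qrel_smult: assumes "is_qrel X Y R" "x \<in> R a b" shows "c \<cdot>\<^sub>m x \<in> R a b"
  by (rule mat_subspaceD(4)[OF qrelD[OF assms(1) qrel_mem(1,2)[OF assms(1,2)]] assms(2)])

lemma qrelI: assumes "\<And>a b. a \<in> At X \<Longrightarrow> b \<in> At Y \<Longrightarrow> mat_subspace (dm Y b) (dm X a) (R a b)"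
  "\<And>a b. \<not> (a \<in> At X \<and> b \<in> At Y) \<Longrightarrow> R a b = {}"
  shows "is_qrel X Y R"
  unfolding is_qrel_def using assms by auto

definition comp_gens ::
    "'a qset \<Rightarrow> 'b qset \<Rightarrow> 'c qset \<Rightarrow> ('b,'c) qrel \<Rightarrow> ('a,'b) qrel \<Rightarrow> 'a \<Rightarrow> 'c \<Rightarrow> complex mat set"
  where
  "comp_gens X Y Z S R a c = {s * r | r s b. b \<in> At Y \<and> r \<in> R a b \<and> s \<in> S b c}"

lemma qcomp_eq_span_gens: "a \<in> At X \<Longrightarrow> c \<in> At Z \<Longrightarrow>
  qcomp X Y Z S R a c = mat_span (dm Z c) (dm X a) (comp_gens X Y Z S R a c)"
  unfolding qcomp_def comp_gens_def by simp

lemma qcomp_off: "\<not> (a \<in> At X \<and> c \<in> At Z) \<Longrightarrow> qcomp X Y Z S R a c = {}"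
  unfolding qcomp_def by auto

lemma comp_gens_carrier: assumes "is_qrel X Y R" "is_qrel Y Z S"
  shows "comp_gens X Y Z S R a c \<subseteq> carrier_mat (dm Z c) (dm X a)"
proof
  fix x assume "x \<in> comp_gens X Y Z S R a c"
  then obtain r s b where x: "x = s * r" and r: "r \<in> R a b" and s: "s \<in> S b c" unfolding comp_gens_def by auto
  show "x \<in> carrier_mat (dm Z c) (dm X a)" unfolding x
    using qrel_mem(3)[OF assms(1) r] qrel_mem(3)[OF assms(2) s] by (rule mult_carrier_mat[rotated])
qed

lemma qcomp_rel: assumes "is_qrel X Y R" "is_qrel Y Z S"
  shows "is_qrel X Z (qcomp X Y Z S R)"
proof (rule qrelI)
  fix a c assume "a \<in> At X" "c \<in> At Z"
  show "mat_subspace (dm Z c) (dm X a) (qcomp X Y Z S R a c)"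
    unfolding qcomp_eq_span_gens[OF \<open>a \<in> At X\<close> \<open>c \<in> At Z\<close>]
    by (rule mat_span_subspace[OF comp_gens_carrier[OF assms]])
qed (rule qcomp_off)

lemma qcomp_memI: assumes "is_qrel X Y R" "is_qrel Y Z S" "r \<in> R a b" "s \<in> S b c"
  shows "s * r \<in> qcomp X Y Z S R a c"
proof -
  have a: "a \<in> At X" and b: "b \<in> At Y" and c: "c \<in> At Z"
    using qrel_mem(1,2)[OF assms(1,3)] qrel_mem(2)[OF assms(2,4)] by auto
  have "s * r \<in> comp_gens X Y Z S R a c" unfolding comp_gens_def using assms(3,4) b by blast
  then show ?thesis unfolding qcomp_eq_span_gens[OF a c] by (rule mat_span_inc[OF comp_gens_carrier[OF assms(1,2)]])
qed

lemma qcomp_leI: assumes W: "is_qrel X Z W"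
  and H: "\<And>a c b r s. a \<in> At X \<Longrightarrow> c \<in> At Z \<Longrightarrow> b \<in> At Y \<Longrightarrow> r \<in> R a b \<Longrightarrow> s \<in> S b c \<Longrightarrow> s * r \<in> W a c"
  shows "qle (qcomp X Y Z S R) W"
  unfolding qle_def
proof (intro allI)
  fix a c
  show "qcomp X Y Z S R a c \<subseteq> W a c"
  proof (cases "a \<in> At X \<and> c \<in> At Z")
    case True
    have "comp_gens X Y Z S R a c \<subseteq> W a c"
    proof
      fix x assume "x \<in> comp_gens X Y Z S R a c"
      then obtain r s b where "x = s * r" "b \<in> At Y" "r \<in> R a b" "s \<in> S b c" unfolding comp_gens_def by blast
      then show "x \<in> W a c" using H True by blast
    qed
    then show ?thesis unfolding qcomp_eq_span_gens[OF conjunct1[OF True] conjunct2[OF True]]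
      by (intro mat_span_least qrelD[OF W] conjunct1[OF True] conjunct2[OF True])
  qed (simp add: qcomp_off)
qed

lemma qcomp_mono: assumes "qle R R'" "qle S S'"
  shows "qle (qcomp X Y Z S R) (qcomp X Y Z S' R')"
  unfolding qle_def
proof (intro allI)
  fix a c
  show "qcomp X Y Z S R a c \<subseteq> qcomp X Y Z S' R' a c"
  proof (cases "a \<in> At X \<and> c \<in> At Z")
    case True
    have "comp_gens X Y Z S R a c \<subseteq> comp_gens X Y Z S' R' a c"
      using assms unfolding comp_gens_def qle_def by blast
    then show ?thesis unfolding qcomp_eq_span_gens[OF conjunct1[OF True] conjunct2[OF True]]
      by (rule mat_span_mono)
  qed (simp add: qcomp_off)
qed

lemma qle_refl[simp]: "qle R R" unfolding qle_def by simp

lemma qle_trans: "qle R S \<Longrightarrow> qle S T \<Longrightarrow> qle R T" unfolding qle_def by blast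

lemma qle_antisym: "qle R S \<Longrightarrow> qle S R \<Longrightarrow> R = S" unfolding qle_def by (intro ext) blast

lemma qle_eq_trans[trans]: "qle a b \<Longrightarrow> b = c \<Longrightarrow> qle a c" by simp

lemma eq_qle_trans[trans]: "a = b \<Longrightarrow> qle b c \<Longrightarrow> qle a c" by simp

declare qle_trans[trans]

lemma qcomp_induct:
  assumes R: "is_qrel X Y R" and S: "is_qrel Y Z S" and V: "mat_subspace n' m' V"
    and u: "u \<in> qcomp X Y Z S R a c"
    and f0: "f (0\<^sub>m (dm Z c) (dm X a)) \<in> V"
    and fstep: "\<And>r s b y k. b \<in> At Y \<Longrightarrow> r \<in> R a b \<Longrightarrow> s \<in> S b c \<Longrightarrow> y \<in> carrier_mat (dm Z c) (dm X a)
        \<Longrightarrow> f y \<in> V \<Longrightarrow> f (k \<cdot>\<^sub>m (s * r) + y) \<in> V"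
  shows "f u \<in> V"
proof -
  have ac: "a \<in> At X \<and> c \<in> At Z" using u qcomp_off by fastforce
  have u': "u \<in> mat_span (dm Z c) (dm X a) (comp_gens X Y Z S R a c)"
    using u qcomp_eq_span_gens ac by metis
  have step: "\<And>s y k. s \<in> comp_gens X Y Z S R a c \<Longrightarrow> y \<in> carrier_mat (dm Z c) (dm X a)
      \<Longrightarrow> f y \<in> V \<Longrightarrow> f (k \<cdot>\<^sub>m s + y) \<in> V"
  proof -
    fix s y k assume "s \<in> comp_gens X Y Z S R a c" "y \<in> carrier_mat (dm Z c) (dm X a)" "f y \<in> V"
    then obtain r s' b where "s = s' * r" "b \<in> At Y" "r \<in> R a b" "s' \<in> S b c" unfolding comp_gens_def by blast
    then show "f (k \<cdot>\<^sub>m s + y) \<in> V" using fstep \<open>y \<in> _\<close> \<open>f y \<in> V\<close> by blast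
  qed
  show ?thesis
    by (rule mat_span_image_in_subspace[OF comp_gens_carrier[OF R S, of a c] V f0 step u'])
qed

lemma smult_add_mult_assoc_right:
  fixes t s y r :: "complex mat"
  assumes t: "t \<in> carrier_mat n k" and s: "s \<in> carrier_mat k l" and y: "y \<in> carrier_mat n l"
  and r: "r \<in> carrier_mat l m"
  shows "(c \<cdot>\<^sub>m (t * s) + y) * r = c \<cdot>\<^sub>m (t * (s * r)) + y * r"
proof -
  have ts: "t * s \<in> carrier_mat n l" using t s by simp
  have "(c \<cdot>\<^sub>m (t * s) + y) * r = (c \<cdot>\<^sub>m (t * s)) * r + y * r"
    by (rule add_mult_distrib_mat[OF smult_carrier_mat[OF ts] y r])
  also have "(c \<cdot>\<^sub>m (t * s)) * r = c \<cdot>\<^sub>m ((t * s) * r)" by (rule mult_smult_assoc_mat[OF ts r])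
  also have "(t * s) * r = t * (s * r)" by (rule assoc_mult_mat[OF t s r])
  finally show ?thesis .
qed

lemma smult_add_mult_assoc_left:
  fixes t s y r :: "complex mat"
  assumes t: "t \<in> carrier_mat n k" and s: "s \<in> carrier_mat k l" and r: "r \<in> carrier_mat l m"
  and y: "y \<in> carrier_mat k m"
  shows "t * (c \<cdot>\<^sub>m (s * r) + y) = c \<cdot>\<^sub>m ((t * s) * r) + t * y"
proof -
  have sr: "s * r \<in> carrier_mat k m" using s r by simp
  have "t * (c \<cdot>\<^sub>m (s * r) + y) = t * (c \<cdot>\<^sub>m (s * r)) + t * y"
    by (rule mult_add_distrib_mat[OF t smult_carrier_mat[OF sr] y])
  also have "t * (c \<cdot>\<^sub>m (s * r)) = c \<cdot>\<^sub>m (t * (s * r))" by (rule mult_smult_distrib[OF t sr])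
  also have "t * (s * r) = (t * s) * r" by (rule assoc_mult_mat[OF t s r, symmetric])
  finally show ?thesis .
qed

lemma qcomp_assoc_le: assumes R: "is_qrel X Y R" and S: "is_qrel Y Z S" and T: "is_qrel Z W T"
  shows "qle (qcomp X Y W (qcomp Y Z W T S) R) (qcomp X Z W T (qcomp X Y Z S R))"
proof (rule qcomp_leI)
  have SR: "is_qrel X Z (qcomp X Y Z S R)" by (rule qcomp_rel[OF R S])
  have TS: "is_qrel Y W (qcomp Y Z W T S)" by (rule qcomp_rel[OF S T])
  show RHS: "is_qrel X W (qcomp X Z W T (qcomp X Y Z S R))" by (rule qcomp_rel[OF SR T])
  fix a d b r u assume a: "a \<in> At X" and d: "d \<in> At W" and b: "b \<in> At Y" and r: "r \<in> R a b"
    and u: "u \<in> qcomp Y Z W T S b d"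
  have rc: "r \<in> carrier_mat (dm Y b) (dm X a)" by (rule qrel_mem(3)[OF R r])
  show "u * r \<in> qcomp X Z W T (qcomp X Y Z S R) a d"
  proof (rule qcomp_induct[OF S T qrelD[OF RHS a d] u, where f = "\<lambda>u. u * r"])
    show "0\<^sub>m (dm W d) (dm Y b) * r \<in> qcomp X Z W T (qcomp X Y Z S R) a d"
      using qrel_zero[OF RHS a d] rc by simp
  next
    fix s t c y k assume c: "c \<in> At Z" and s: "s \<in> S b c" and t: "t \<in> T c d"
      and y: "y \<in> carrier_mat (dm W d) (dm Y b)" and yr: "y * r \<in> qcomp X Z W T (qcomp X Y Z S R) a d"
    have eq: "(k \<cdot>\<^sub>m (t * s) + y) * r = k \<cdot>\<^sub>m (t * (s * r)) + y * r"
      by (rule smult_add_mult_assoc_right[OF qrel_mem(3)[OF T t] qrel_mem(3)[OF S s] y rc])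
    have "t * (s * r) \<in> qcomp X Z W T (qcomp X Y Z S R) a d"
      by (rule qcomp_memI[OF SR T qcomp_memI[OF R S r s] t])
    then show "(k \<cdot>\<^sub>m (t * s) + y) * r \<in> qcomp X Z W T (qcomp X Y Z S R) a d"
      unfolding eq by (intro qrel_add[OF RHS] qrel_smult[OF RHS] yr)
  qed
qed

lemma qcomp_assoc_ge: assumes R: "is_qrel X Y R" and S: "is_qrel Y Z S" and T: "is_qrel Z W T"
  shows "qle (qcomp X Z W T (qcomp X Y Z S R)) (qcomp X Y W (qcomp Y Z W T S) R)"
proof (rule qcomp_leI)
  have SR: "is_qrel X Z (qcomp X Y Z S R)" by (rule qcomp_rel[OF R S])
  have TS: "is_qrel Y W (qcomp Y Z W T S)" by (rule qcomp_rel[OF S T])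
  show LHS: "is_qrel X W (qcomp X Y W (qcomp Y Z W T S) R)" by (rule qcomp_rel[OF R TS])
  fix a d c v t assume a: "a \<in> At X" and d: "d \<in> At W" and c: "c \<in> At Z" and v: "v \<in> qcomp X Y Z S R a c"
    and t: "t \<in> T c d"
  have tc: "t \<in> carrier_mat (dm W d) (dm Z c)" by (rule qrel_mem(3)[OF T t])
  show "t * v \<in> qcomp X Y W (qcomp Y Z W T S) R a d"
  proof (rule qcomp_induct[OF R S qrelD[OF LHS a d] v, where f = "\<lambda>v. t * v"])
    show "t * 0\<^sub>m (dm Z c) (dm X a) \<in> qcomp X Y W (qcomp Y Z W T S) R a d"
      using qrel_zero[OF LHS a d] tc by simp
  next
    fix r s b y k assume b: "b \<in> At Y" and r: "r \<in> R a b" and s: "s \<in> S b c"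
      and y: "y \<in> carrier_mat (dm Z c) (dm X a)" and ty: "t * y \<in> qcomp X Y W (qcomp Y Z W T S) R a d"
    have eq: "t * (k \<cdot>\<^sub>m (s * r) + y) = k \<cdot>\<^sub>m ((t * s) * r) + t * y"
      by (rule smult_add_mult_assoc_left[OF tc qrel_mem(3)[OF S s] qrel_mem(3)[OF R r] y])
    have "(t * s) * r \<in> qcomp X Y W (qcomp Y Z W T S) R a d"
      by (rule qcomp_memI[OF R TS r qcomp_memI[OF S T s t]])
    then show "t * (k \<cdot>\<^sub>m (s * r) + y) \<in> qcomp X Y W (qcomp Y Z W T S) R a d"
      unfolding eq by (intro qrel_add[OF LHS] qrel_smult[OF LHS] ty)
  qed
qed

lemma qcomp_assoc: assumes R: "is_qrel X Y R" and S: "is_qrel Y Z S" and T: "is_qrel Z W T"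
  shows "qcomp X Y W (qcomp Y Z W T S) R = qcomp X Z W T (qcomp X Y Z S R)"
  by (rule qle_antisym[OF qcomp_assoc_le[OF assms] qcomp_assoc_ge[OF assms]])

lemma scal_mem: "k \<cdot>\<^sub>m 1\<^sub>m n \<in> {c \<cdot>\<^sub>m 1\<^sub>m n | c. True}" by blast

lemma qid_same: "a \<in> At X \<Longrightarrow> qid X a a = {c \<cdot>\<^sub>m 1\<^sub>m (dm X a) | c. True}"
  unfolding qid_def by simp

lemma qid_diff: "a \<in> At X \<Longrightarrow> a' \<in> At X \<Longrightarrow> a \<noteq> a' \<Longrightarrow> qid X a a' = {0\<^sub>m (dm X a') (dm X a)}"
  unfolding qid_def by simp

lemma qid_off: assumes "\<not> (a \<in> At X \<and> a' \<in> At X)" shows "qid X a a' = {}"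
  unfolding qid_def by (rule if_not_P[OF assms])

lemma line_subspace: fixes e :: "complex mat" assumes e: "e \<in> carrier_mat n m"
  shows "mat_subspace n m {c \<cdot>\<^sub>m e | c. True}"
  unfolding mat_subspace_def
proof (intro conjI ballI allI impI)
  show "{c \<cdot>\<^sub>m e | c. True} \<subseteq> carrier_mat n m" using e by auto
  have "0\<^sub>m n m = 0 \<cdot>\<^sub>m e" using e by (intro eq_matI) auto
  then show "0\<^sub>m n m \<in> {c \<cdot>\<^sub>m e | c. True}" by blast
next
  fix x y assume "x \<in> {c \<cdot>\<^sub>m e | c. True}" "y \<in> {c \<cdot>\<^sub>m e | c. True}"
  then obtain c1 c2 where "x = c1 \<cdot>\<^sub>m e" "y = c2 \<cdot>\<^sub>m e" by blast
  moreover have "c1 \<cdot>\<^sub>m e + c2 \<cdot>\<^sub>m e = (c1 + c2) \<cdot>\<^sub>m e" using e by (intro eq_matI) (auto simp: algebra_simps)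
  ultimately show "x + y \<in> {c \<cdot>\<^sub>m e | c. True}" by blast
next
  fix k :: complex and x assume "x \<in> {c \<cdot>\<^sub>m e | c. True}"
  then obtain c1 where "x = c1 \<cdot>\<^sub>m e" by blast
  moreover have "k \<cdot>\<^sub>m (c1 \<cdot>\<^sub>m e) = (k * c1) \<cdot>\<^sub>m e" using e by (intro eq_matI) auto
  ultimately show "k \<cdot>\<^sub>m x \<in> {c \<cdot>\<^sub>m e | c. True}" by blast
qed

lemma zero_subspace: "mat_subspace n m {0\<^sub>m n m :: complex mat}"
  unfolding mat_subspace_def by auto

lemma zero_in_qid: assumes a: "a \<in> At X" and c: "c \<in> At X" shows "0\<^sub>m (dm X c) (dm X a) \<in> qid X a c"
proof (cases "a = c")
  case True
  show ?thesis unfolding True qid_same[OF c] by (subst zero_scal) (rule scal_mem)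
next
  case False then show ?thesis using qid_diff[OF a c] by simp
qed

lemma qid_rel: "is_qrel X X (qid X)"
proof (rule qrelI)
  fix a b assume a: "a \<in> At X" and b: "b \<in> At X"
  show "mat_subspace (dm X b) (dm X a) (qid X a b)"
  proof (cases "a = b")
    case True
    show ?thesis unfolding True qid_same[OF b] by (rule line_subspace[OF one_carrier_mat])
  next
    case False
    show ?thesis unfolding qid_diff[OF a b False] by (rule zero_subspace)
  qed
qed (rule qid_off)

lemma qcomp_id_right: assumes R: "is_qrel X Y R" shows "qcomp X X Y R (qid X) = R"
proof (rule qle_antisym)
  show "qle (qcomp X X Y R (qid X)) R"
  proof (rule qcomp_leI[OF R])
    fix a c b i s assume a: "a \<in> At X" and c: "c \<in> At Y" and b: "b \<in> At X" and i: "i \<in> qid X a b" and s: "s \<in> R b c"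
    have sc: "s \<in> carrier_mat (dm Y c) (dm X b)" by (rule qrel_mem(3)[OF R s])
    show "s * i \<in> R a c"
    proof (cases "a = b")
      case True
      then obtain k where "i = k \<cdot>\<^sub>m 1\<^sub>m (dm X b)" using i qid_same[OF a] by auto
      then have "s * i = k \<cdot>\<^sub>m s" using sc by (simp add: mult_smult_distrib[OF sc one_carrier_mat])
      then show ?thesis using qrel_smult[OF R s] True by simp
    next
      case False
      then have "i = 0\<^sub>m (dm X b) (dm X a)" using i qid_diff[OF a b] by auto
      then have "s * i = 0\<^sub>m (dm Y c) (dm X a)" using sc by simp
      then show ?thesis using qrel_zero[OF R a c] by simp
    qed
  qed
next
  show "qle R (qcomp X X Y R (qid X))" unfolding qle_def
  proof (intro allI subsetI)
    fix a c r assume r: "r \<in> R a c"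
    have a: "a \<in> At X" and rc: "r \<in> carrier_mat (dm Y c) (dm X a)" using qrel_mem[OF R r] by auto
    have "1\<^sub>m (dm X a) \<in> qid X a a" unfolding qid_same[OF a]
      by (intro CollectI exI[of _ 1] conjI eq_matI) auto
    then have "r * 1\<^sub>m (dm X a) \<in> qcomp X X Y R (qid X) a c"
      by (rule qcomp_memI[OF qid_rel R _ r])
    then show "r \<in> qcomp X X Y R (qid X) a c" using rc by simp
  qed
qed

lemma qcomp_id_left: assumes R: "is_qrel X Y R" shows "qcomp X Y Y (qid Y) R = R"
proof (rule qle_antisym)
  show "qle (qcomp X Y Y (qid Y) R) R"
  proof (rule qcomp_leI[OF R])
    fix a c b r i assume a: "a \<in> At X" and c: "c \<in> At Y" and b: "b \<in> At Y" and r: "r \<in> R a b" and i: "i \<in> qid Y b c"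
    have rc: "r \<in> carrier_mat (dm Y b) (dm X a)" by (rule qrel_mem(3)[OF R r])
    show "i * r \<in> R a c"
    proof (cases "b = c")
      case True
      then obtain k where "i = k \<cdot>\<^sub>m 1\<^sub>m (dm Y b)" using i qid_same[OF b] by auto
      then have "i * r = k \<cdot>\<^sub>m r" using rc by (simp add: mult_smult_assoc_mat[OF one_carrier_mat rc])
      then show ?thesis using qrel_smult[OF R r] True by simp
    next
      case False
      then have "i = 0\<^sub>m (dm Y c) (dm Y b)" using i qid_diff[OF b c] by auto
      then have "i * r = 0\<^sub>m (dm Y c) (dm X a)" using rc by simp
      then show ?thesis using qrel_zero[OF R a c] by simp
    qed
  qed
next
  show "qle R (qcomp X Y Y (qid Y) R)" unfolding qle_def
  proof (intro allI subsetI)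
    fix a c r assume r: "r \<in> R a c"
    have c: "c \<in> At Y" and rc: "r \<in> carrier_mat (dm Y c) (dm X a)" using qrel_mem[OF R r] by auto
    have "1\<^sub>m (dm Y c) \<in> qid Y c c" unfolding qid_same[OF c]
      by (intro CollectI exI[of _ 1] conjI eq_matI) auto
    then have "1\<^sub>m (dm Y c) * r \<in> qcomp X Y Y (qid Y) R a c"
      by (rule qcomp_memI[OF R qid_rel r])
    then show "r \<in> qcomp X Y Y (qid Y) R a c" using rc by simp
  qed
qed

lemma qadj_apply: "qadj R b a = cadj ` R a b" unfolding qadj_def by simp

lemma qadj_rel: assumes R: "is_qrel X Y R" shows "is_qrel Y X (qadj R)"
proof (rule qrelI)
  fix b a assume b: "b \<in> At Y" and a: "a \<in> At X"
  have V: "mat_subspace (dm Y b) (dm X a) (R a b)" by (rule qrelD[OF R a b])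
  show "mat_subspace (dm X a) (dm Y b) (qadj R b a)" unfolding qadj_apply mat_subspace_def
  proof (intro conjI ballI allI impI)
    show "cadj ` R a b \<subseteq> carrier_mat (dm X a) (dm Y b)" using mat_subspaceD(1)[OF V] by auto
    show "0\<^sub>m (dm X a) (dm Y b) \<in> cadj ` R a b"
      using mat_subspaceD(2)[OF V] by (metis cadj_zero image_eqI)
  next
    fix x y assume "x \<in> cadj ` R a b" "y \<in> cadj ` R a b"
    then obtain x' y' where x: "x = cadj x'" "x' \<in> R a b" and y: "y = cadj y'" "y' \<in> R a b" by blast
    have xc: "x' \<in> carrier_mat (dm Y b) (dm X a)" and yc: "y' \<in> carrier_mat (dm Y b) (dm X a)"
      using mat_subspaceD(1)[OF V] x y by auto
    have "x + y = cadj (x' + y')" unfolding x y by (rule cadj_add[OF xc yc, symmetric])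
    then show "x + y \<in> cadj ` R a b" using mat_subspaceD(3)[OF V x(2) y(2)] by blast
  next
    fix c x assume "x \<in> cadj ` R a b"
    then obtain x' where x: "x = cadj x'" "x' \<in> R a b" by blast
    have "c \<cdot>\<^sub>m x = cadj (cnj c \<cdot>\<^sub>m x')" unfolding x by simp
    then show "c \<cdot>\<^sub>m x \<in> cadj ` R a b" using mat_subspaceD(4)[OF V x(2)] by blast
  qed
next
  fix b a assume "\<not> (b \<in> At Y \<and> a \<in> At X)"
  then show "qadj R b a = {}" unfolding qadj_apply using qrel_off[OF R, of a b] by auto
qed

lemma qadj_qadj[simp]: "qadj (qadj R) = R"
  unfolding qadj_def by (intro ext) (simp add: image_image)

lemma qadj_mono: "qle R S \<Longrightarrow> qle (qadj R) (qadj S)"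
  unfolding qle_def qadj_def by blast

lemma qadj_mem: "r \<in> R a b \<Longrightarrow> cadj r \<in> qadj R b a" unfolding qadj_def by simp

lemma qadj_comp_le: assumes R: "is_qrel X Y R" and S: "is_qrel Y Z S"
  shows "qle (qadj (qcomp X Y Z S R)) (qcomp Z Y X (qadj R) (qadj S))"
  unfolding qle_def
proof (intro allI subsetI)
  have RHS: "is_qrel Z X (qcomp Z Y X (qadj R) (qadj S))"
    by (rule qcomp_rel[OF qadj_rel[OF S] qadj_rel[OF R]])
  fix c a x assume "x \<in> qadj (qcomp X Y Z S R) c a"
  then obtain u where x: "x = cadj u" and u: "u \<in> qcomp X Y Z S R a c" unfolding qadj_apply by blast
  have ac: "a \<in> At X" "c \<in> At Z" using u qcomp_off by fastforce+
  show "x \<in> qcomp Z Y X (qadj R) (qadj S) c a" unfolding x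
  proof (rule qcomp_induct[OF R S qrelD[OF RHS ac(2) ac(1)] u, where f = cadj])
    show "cadj (0\<^sub>m (dm Z c) (dm X a)) \<in> qcomp Z Y X (qadj R) (qadj S) c a"
      using qrel_zero[OF RHS ac(2) ac(1)] by simp
  next
    fix r s b y k assume b: "b \<in> At Y" and r: "r \<in> R a b" and s: "s \<in> S b c"
      and y: "y \<in> carrier_mat (dm Z c) (dm X a)" and yy: "cadj y \<in> qcomp Z Y X (qadj R) (qadj S) c a"
    have rc: "r \<in> carrier_mat (dm Y b) (dm X a)" by (rule qrel_mem(3)[OF R r])
    have sc: "s \<in> carrier_mat (dm Z c) (dm Y b)" by (rule qrel_mem(3)[OF S s])
    have eq: "cadj (k \<cdot>\<^sub>m (s * r) + y) = cnj k \<cdot>\<^sub>m (cadj r * cadj s) + cadj y"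
      using cadj_add[OF smult_carrier_mat[OF mult_carrier_mat[OF sc rc]] y] cadj_mult[OF sc rc] by simp
    have "cadj r * cadj s \<in> qcomp Z Y X (qadj R) (qadj S) c a"
      by (rule qcomp_memI[OF qadj_rel[OF S] qadj_rel[OF R] qadj_mem[of s S b c] qadj_mem[of r R a b]]) (use r s in auto)
    then show "cadj (k \<cdot>\<^sub>m (s * r) + y) \<in> qcomp Z Y X (qadj R) (qadj S) c a"
      unfolding eq by (intro qrel_add[OF RHS] qrel_smult[OF RHS] yy)
  qed
qed

lemma qadj_comp: assumes R: "is_qrel X Y R" and S: "is_qrel Y Z S"
  shows "qadj (qcomp X Y Z S R) = qcomp Z Y X (qadj R) (qadj S)"
proof (rule qle_antisym[OF qadj_comp_le[OF R S]])
  have "qle (qadj (qcomp Z Y X (qadj R) (qadj S))) (qcomp X Y Z (qadj (qadj S)) (qadj (qadj R)))"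
    by (rule qadj_comp_le[OF qadj_rel[OF S] qadj_rel[OF R]])
  then have "qle (qadj (qcomp Z Y X (qadj R) (qadj S))) (qcomp X Y Z S R)" by simp
  from qadj_mono[OF this] show "qle (qcomp Z Y X (qadj R) (qadj S)) (qadj (qcomp X Y Z S R))" by simp
qed

lemma qadj_qid_le: "qle (qadj (qid X)) (qid X)"
  unfolding qle_def
proof (intro allI subsetI)
  fix a a' x assume "x \<in> qadj (qid X) a a'"
  then obtain i where x: "x = cadj i" and i: "i \<in> qid X a' a" unfolding qadj_apply by blast
  have a: "a \<in> At X" and a': "a' \<in> At X" using i qid_off by fastforce+
  show "x \<in> qid X a a'"
  proof (cases "a = a'")
    case True
    then obtain k where "i = k \<cdot>\<^sub>m 1\<^sub>m (dm X a)" using i qid_same[OF a] by auto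
    then have "x = cnj k \<cdot>\<^sub>m 1\<^sub>m (dm X a)" unfolding x by simp
    then show ?thesis unfolding True qid_same[OF a'] using True by blast
  next
    case False
    then have "i = 0\<^sub>m (dm X a) (dm X a')" using i qid_diff[OF a' a] by auto
    then show ?thesis unfolding x qid_diff[OF a a' False] by simp
  qed
qed

lemma qadj_qid: "qadj (qid X) = qid X"
proof (rule qle_antisym[OF qadj_qid_le])
  show "qle (qid X) (qadj (qid X))" using qadj_mono[OF qadj_qid_le[of X]] by simp
qed

lemma qinf_rel: assumes "is_qrel X Y R" "is_qrel X Y S" shows "is_qrel X Y (qinf R S)"
proof (rule qrelI)
  fix a b assume a: "a \<in> At X" and b: "b \<in> At Y"
  note V = qrelD[OF assms(1) a b] qrelD[OF assms(2) a b]
  show "mat_subspace (dm Y b) (dm X a) (qinf R S a b)" unfolding qinf_def mat_subspace_def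
    using mat_subspaceD[OF V(1)] mat_subspaceD[OF V(2)] by auto
qed (simp add: qinf_def qrel_off[OF assms(1)])

lemma qinf_le1: "qle (qinf R S) R" and qinf_le2: "qle (qinf R S) S"
  unfolding qle_def qinf_def by auto

lemma qinf_greatest: "qle W R \<Longrightarrow> qle W S \<Longrightarrow> qle W (qinf R S)"
  unfolding qle_def qinf_def by auto

lemma inj_cadj: "inj cadj" by (metis cadj_cadj injI)

lemma qadj_qinf: "qadj (qinf R S) = qinf (qadj R) (qadj S)"
  unfolding qadj_def qinf_def by (intro ext) (simp add: image_Int[OF inj_cadj])

lemma qMeet_rel: assumes "\<And>i. i \<in> I \<Longrightarrow> is_qrel X Y (Rs i)" shows "is_qrel X Y (qMeet X Y I Rs)"
proof (rule qrelI)
  fix a b assume a: "a \<in> At X" and b: "b \<in> At Y"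
  show "mat_subspace (dm Y b) (dm X a) (qMeet X Y I Rs a b)" unfolding qMeet_def mat_subspace_def
    using a b mat_subspaceD[OF qrelD[OF assms a b]] by auto
next
  fix a b assume "\<not> (a \<in> At X \<and> b \<in> At Y)"
  then show "qMeet X Y I Rs a b = {}" unfolding qMeet_def by (rule if_not_P)
qed

lemma qMeet_le: "i \<in> I \<Longrightarrow> qle (qMeet X Y I Rs) (Rs i)"
  unfolding qle_def qMeet_def by auto

lemma qMeet_greatest: assumes "is_qrel X Y W" "\<And>i. i \<in> I \<Longrightarrow> qle W (Rs i)"
  shows "qle W (qMeet X Y I Rs)"
  unfolding qle_def qMeet_def
proof (intro allI subsetI)
  fix a b x assume x: "x \<in> W a b"
  show "x \<in> (if a \<in> At X \<and> b \<in> At Y then carrier_mat (dm Y b) (dm X a) \<inter> (\<Inter>i\<in>I. Rs i a b) else {})"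
    using qrel_mem[OF assms(1) x] x assms(2) unfolding qle_def by auto
qed

section \<open>Functions\<close>

lemma qfunD: assumes "qfun X Y F"
  shows "is_qrel X Y F" "qle (qcomp Y X Y F (qadj F)) (qid Y)" "qle (qid X) (qcomp X Y X (qadj F) F)"
  using assms unfolding qfun_def by auto

lemma qfun_le_comp_adj_comp: assumes F: "qfun X Y F" and W: "is_qrel X Z W"
  shows "qle W (qcomp X Y Z (qcomp Y X Z W (qadj F)) F)"
proof -
  note Fr = qfunD(1)[OF F]
  have "W = qcomp X X Z W (qid X)" by (rule qcomp_id_right[OF W, symmetric])
  also have "qle \<dots> (qcomp X X Z W (qcomp X Y X (qadj F) F))"
    by (rule qcomp_mono[OF qfunD(3)[OF F] qle_refl])
  also have "qcomp X X Z W (qcomp X Y X (qadj F) F) = qcomp X Y Z (qcomp Y X Z W (qadj F)) F"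
    by (rule qcomp_assoc[OF Fr qadj_rel[OF Fr] W, symmetric])
  finally show ?thesis by simp
qed

lemma qfun_comp_adj_le: assumes F: "qfun X Y F" and T: "is_qrel Y Z T"
  shows "qle (qcomp Y X Z (qcomp X Y Z T F) (qadj F)) T"
proof -
  note Fr = qfunD(1)[OF F]
  have "qcomp Y X Z (qcomp X Y Z T F) (qadj F) = qcomp Y Y Z T (qcomp Y X Y F (qadj F))"
    by (rule qcomp_assoc[OF qadj_rel[OF Fr] Fr T])
  also have "qle \<dots> (qcomp Y Y Z T (qid Y))"
    by (rule qcomp_mono[OF qfunD(2)[OF F] qle_refl])
  also have "qcomp Y Y Z T (qid Y) = T" by (rule qcomp_id_right[OF T])
  finally show ?thesis by simp
qed

lemma qfun_comp_comp_adj_le: assumes J: "qfun X Y J" and B: "is_qrel X Y B"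
  shows "qle (qcomp X X Y J (qcomp X Y X (qadj J) B)) B"
proof -
  note Jr = qfunD(1)[OF J]
  have "qcomp X X Y J (qcomp X Y X (qadj J) B) = qcomp X Y Y (qcomp Y X Y J (qadj J)) B"
    by (rule qcomp_assoc[OF B qadj_rel[OF Jr] Jr, symmetric])
  also have "qle \<dots> (qcomp X Y Y (qid Y) B)" by (rule qcomp_mono[OF qle_refl qfunD(2)[OF J]])
  also have "qcomp X Y Y (qid Y) B = B" by (rule qcomp_id_left[OF B])
  finally show ?thesis .
qed

lemma qfun_le_imp_eq: assumes F: "qfun X Y F" and G: "qfun X Y G" and le: "qle F G"
  shows "F = G"
proof (rule qle_antisym[OF le])
  note Fr = qfunD(1)[OF F] and Gr = qfunD(1)[OF G]
  have "qle G (qcomp X Y Y (qcomp Y X Y G (qadj F)) F)" by (rule qfun_le_comp_adj_comp[OF F Gr])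
  also have "qle (qcomp X Y Y (qcomp Y X Y G (qadj F)) F) (qcomp X Y Y (qcomp Y X Y G (qadj G)) F)"
    by (rule qcomp_mono[OF qle_refl qcomp_mono[OF qadj_mono[OF le] qle_refl]])
  also have "qle \<dots> (qcomp X Y Y (qid Y) F)"
    by (rule qcomp_mono[OF qle_refl qfunD(2)[OF G]])
  also have "qcomp X Y Y (qid Y) F = F" by (rule qcomp_id_left[OF Fr])
  finally show "qle G F" .
qed

lemma qfun_comp: assumes F: "qfun X Y F" and G: "qfun Y Z G"
  shows "qfun X Z (qcomp X Y Z G F)"
proof -
  note Fr = qfunD(1)[OF F] and Gr = qfunD(1)[OF G]
  note Fa = qadj_rel[OF Fr] and Ga = qadj_rel[OF Gr]
  have adj: "qadj (qcomp X Y Z G F) = qcomp Z Y X (qadj F) (qadj G)" by (rule qadj_comp[OF Fr Gr])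
  have GF: "is_qrel X Z (qcomp X Y Z G F)" by (rule qcomp_rel[OF Fr Gr])
  have FdGd: "is_qrel Z X (qcomp Z Y X (qadj F) (qadj G))" by (rule qcomp_rel[OF Ga Fa])
  have comp_adj: "qle (qcomp Z X Z (qcomp X Y Z G F) (qadj (qcomp X Y Z G F))) (qid Z)"
  proof -
    have "qcomp Z X Z (qcomp X Y Z G F) (qcomp Z Y X (qadj F) (qadj G))
        = qcomp Z Y Z (qcomp Y X Z (qcomp X Y Z G F) (qadj F)) (qadj G)"
      by (rule qcomp_assoc[OF Ga Fa GF, symmetric])
    also have "qle \<dots> (qcomp Z Y Z G (qadj G))"
      by (rule qcomp_mono[OF qle_refl qfun_comp_adj_le[OF F Gr]])
    also have "qle \<dots> (qid Z)" by (rule qfunD(2)[OF G])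
    finally show ?thesis unfolding adj .
  qed
  have adj_comp: "qle (qid X) (qcomp X Z X (qadj (qcomp X Y Z G F)) (qcomp X Y Z G F))"
  proof -
    have "qle (qid X) (qcomp X Y X (qadj F) F)" by (rule qfunD(3)[OF F])
    also have "qcomp X Y X (qadj F) F = qcomp X Y X (qcomp Y Y X (qadj F) (qid Y)) F"
      using qcomp_id_right[OF Fa] by simp
    also have "qle \<dots> (qcomp X Y X (qcomp Y Y X (qadj F) (qcomp Y Z Y (qadj G) G)) F)"
      by (rule qcomp_mono[OF qle_refl qcomp_mono[OF qfunD(3)[OF G] qle_refl]])
    also have "qcomp Y Y X (qadj F) (qcomp Y Z Y (qadj G) G) = qcomp Y Z X (qcomp Z Y X (qadj F) (qadj G)) G"
      by (rule qcomp_assoc[OF Gr Ga Fa, symmetric])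
    also have "qcomp X Y X (qcomp Y Z X (qcomp Z Y X (qadj F) (qadj G)) G) F
        = qcomp X Z X (qcomp Z Y X (qadj F) (qadj G)) (qcomp X Y Z G F)"
      by (rule qcomp_assoc[OF Fr Gr FdGd])
    finally show ?thesis unfolding adj .
  qed
  show ?thesis unfolding qfun_def using GF comp_adj adj_comp by blast
qed

lemma qfun_le_comp_qMeet: assumes F: "qfun X Y F" and W: "is_qrel X Z W"
  and Ts: "\<And>i. i \<in> I \<Longrightarrow> is_qrel Y Z (Ts i)"
  and le: "\<And>i. i \<in> I \<Longrightarrow> qle W (qcomp X Y Z (Ts i) F)"
  shows "qle W (qcomp X Y Z (qMeet Y Z I Ts) F)"
proof -
  note Fr = qfunD(1)[OF F]
  have WFd: "is_qrel Y Z (qcomp Y X Z W (qadj F))" by (rule qcomp_rel[OF qadj_rel[OF Fr] W])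
  have "qle (qcomp Y X Z W (qadj F)) (qMeet Y Z I Ts)"
  proof (rule qMeet_greatest[OF WFd])
    fix i assume i: "i \<in> I"
    have "qle (qcomp Y X Z W (qadj F)) (qcomp Y X Z (qcomp X Y Z (Ts i) F) (qadj F))"
      by (rule qcomp_mono[OF qle_refl le[OF i]])
    also have "qle \<dots> (Ts i)" by (rule qfun_comp_adj_le[OF F Ts[OF i]])
    finally show "qle (qcomp Y X Z W (qadj F)) (Ts i)" .
  qed
  then have "qle (qcomp X Y Z (qcomp Y X Z W (qadj F)) F) (qcomp X Y Z (qMeet Y Z I Ts) F)"
    by (rule qcomp_mono[OF qle_refl])
  with qfun_le_comp_adj_comp[OF F W] show ?thesis by (rule qle_trans)
qed

lemma qfun_le_comp_qinf: assumes F: "qfun X Y F" and W: "is_qrel X Z W"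
  and U: "is_qrel Y Z U" and V: "is_qrel Y Z V"
  and le1: "qle W (qcomp X Y Z U F)" and le2: "qle W (qcomp X Y Z V F)"
  shows "qle W (qcomp X Y Z (qinf U V) F)"
proof -
  note Fr = qfunD(1)[OF F]
  have "qle (qcomp Y X Z W (qadj F)) (qinf U V)"
  proof (rule qinf_greatest)
    show "qle (qcomp Y X Z W (qadj F)) U"
      using qle_trans[OF qcomp_mono[OF qle_refl le1] qfun_comp_adj_le[OF F U]] .
    show "qle (qcomp Y X Z W (qadj F)) V"
      using qle_trans[OF qcomp_mono[OF qle_refl le2] qfun_comp_adj_le[OF F V]] .
  qed
  then have "qle (qcomp X Y Z (qcomp Y X Z W (qadj F)) F) (qcomp X Y Z (qinf U V) F)"
    by (rule qcomp_mono[OF qle_refl])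
  with qfun_le_comp_adj_comp[OF F W] show ?thesis by (rule qle_trans)
qed

section \<open>Preorders and equivalence relations\<close>

definition qpreorder :: "'a qset \<Rightarrow> ('a,'a) qrel \<Rightarrow> bool" where
  "qpreorder X R \<longleftrightarrow> is_qrel X X R \<and> qle (qid X) R \<and> qle (qcomp X X X R R) R"

definition qequiv :: "'a qset \<Rightarrow> ('a,'a) qrel \<Rightarrow> bool" where
  "qequiv X T \<longleftrightarrow> qpreorder X T \<and> qle (qadj T) T"

lemma qposet_iff_qpreorder:
  "qposet X R \<longleftrightarrow> qset X \<and> qpreorder X R \<and> qle (qinf R (qadj R)) (qid X)"
  unfolding qposet_def qpreorder_def by blast

lemma qpreorder_qMeet: assumes pre: "\<And>i. i \<in> I \<Longrightarrow> qpreorder X (Rs i)"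
  shows "qpreorder X (qMeet X X I Rs)"
proof -
  have Rr: "\<And>i. i \<in> I \<Longrightarrow> is_qrel X X (Rs i)" using pre unfolding qpreorder_def by blast
  have M: "is_qrel X X (qMeet X X I Rs)" by (rule qMeet_rel[OF Rr])
  have refl: "qle (qid X) (qMeet X X I Rs)"
    by (rule qMeet_greatest[OF qid_rel]) (use pre in \<open>simp add: qpreorder_def\<close>)
  have "qle (qcomp X X X (qMeet X X I Rs) (qMeet X X I Rs)) (qMeet X X I Rs)"
  proof (rule qMeet_greatest[OF qcomp_rel[OF M M]])
    fix i assume i: "i \<in> I"
    have "qle (qcomp X X X (qMeet X X I Rs) (qMeet X X I Rs)) (qcomp X X X (Rs i) (Rs i))"
      by (rule qcomp_mono[OF qMeet_le[OF i] qMeet_le[OF i]])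
    also have "qle \<dots> (Rs i)" using pre[OF i] unfolding qpreorder_def by blast
    finally show "qle (qcomp X X X (qMeet X X I Rs) (qMeet X X I Rs)) (Rs i)" .
  qed
  then show ?thesis unfolding qpreorder_def using M refl by blast
qed

lemma qequiv_qinf_qadj: assumes pre: "qpreorder X R" shows "qequiv X (qinf R (qadj R))"
proof -
  have Rr: "is_qrel X X R" and refl: "qle (qid X) R" and trans: "qle (qcomp X X X R R) R"
    using pre unfolding qpreorder_def by auto
  have "qle (qcomp X X X (qinf R (qadj R)) (qinf R (qadj R))) (qadj R)"
  proof -
    have "qle (qcomp X X X (qinf R (qadj R)) (qinf R (qadj R))) (qcomp X X X (qadj R) (qadj R))"
      by (rule qcomp_mono[OF qinf_le2 qinf_le2])
    also have "qcomp X X X (qadj R) (qadj R) = qadj (qcomp X X X R R)" by (rule qadj_comp[OF Rr Rr, symmetric])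
    also have "qle \<dots> (qadj R)" by (rule qadj_mono[OF trans])
    finally show ?thesis .
  qed
  moreover have "qle (qcomp X X X (qinf R (qadj R)) (qinf R (qadj R))) R"
    using qle_trans[OF qcomp_mono[OF qinf_le1 qinf_le1] trans] .
  moreover have "qle (qid X) (qinf R (qadj R))"
    using qinf_greatest[OF refl] qadj_mono[OF refl] unfolding qadj_qid by blast
  moreover have "qle (qadj (qinf R (qadj R))) (qinf R (qadj R))"
    unfolding qadj_qinf qadj_qadj by (rule qinf_greatest[OF qinf_le2 qinf_le1])
  ultimately show ?thesis
    unfolding qequiv_def qpreorder_def by (simp add: qinf_rel[OF Rr qadj_rel[OF Rr]] qinf_greatest)
qed

lemma qpreorder_mult_mem: assumes "qpreorder X T" "x \<in> T a b" "y \<in> T b c"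
  shows "y * x \<in> T a c"
proof -
  have Tr: "is_qrel X X T" and "qle (qcomp X X X T T) T" using assms(1) unfolding qpreorder_def by auto
  then show ?thesis using qcomp_memI[OF Tr Tr assms(2,3)] unfolding qle_def by (metis subsetD)
qed

lemma qpreorder_one_mem: assumes "qpreorder X T" "a \<in> At X" shows "1\<^sub>m (dm X a) \<in> T a a"
proof -
  have "1\<^sub>m (dm X a) \<in> qid X a a" unfolding qid_same[OF assms(2)] by (subst one_scal) (rule scal_mem)
  then show ?thesis using assms(1) unfolding qpreorder_def qle_def by blast
qed

lemma qequiv_cadj_mem: assumes "qequiv X T" "x \<in> T a b" shows "cadj x \<in> T b a"
  using qadj_mem[of x T a b, OF assms(2)] assms(1) unfolding qequiv_def qle_def by (metis subsetD)

lemma qequiv_diag_nonscalar_reflection: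
  assumes T: "qequiv X T" and a: "a \<in> At X" and m: "m \<in> T a a" and ns: "\<forall>c. m \<noteq> c \<cdot>\<^sub>m 1\<^sub>m (dm X a)"
  shows "\<exists>e\<in>T a a. cadj e = e \<and> e * e = 1\<^sub>m (dm X a) \<and> (\<forall>c. e \<noteq> c \<cdot>\<^sub>m 1\<^sub>m (dm X a))"
proof (rule star_algebra_nonscalar_reflection[OF _ _ _ _ _ _ m ns])
  have pre: "qpreorder X T" and Tr: "is_qrel X X T" using T unfolding qequiv_def qpreorder_def by auto
  show "T a a \<subseteq> carrier_mat (dm X a) (dm X a)" using qrel_mem(3)[OF Tr] by blast
  show "1\<^sub>m (dm X a) \<in> T a a" by (rule qpreorder_one_mem[OF pre a])
  show "\<forall>x\<in>T a a. \<forall>y\<in>T a a. x * y \<in> T a a" using qpreorder_mult_mem[OF pre] by blast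
  show "\<forall>x\<in>T a a. \<forall>y\<in>T a a. x + y \<in> T a a" using qrel_add[OF Tr] by blast
  show "\<forall>c. \<forall>x\<in>T a a. c \<cdot>\<^sub>m x \<in> T a a" using qrel_smult[OF Tr] by blast
  show "\<forall>x\<in>T a a. cadj x \<in> T a a" using qequiv_cadj_mem[OF T] by blast
qed

lemma qequiv_scaled_unitary_off_qid:
  assumes X: "qset X" and T: "qequiv X T" and nle: "\<not> qle T (qid X)"
  shows "\<exists>ai aj e s s'. ai \<in> At X \<and> aj \<in> At X \<and> e \<in> T ai aj \<and> cadj e * e = s \<cdot>\<^sub>m 1\<^sub>m (dm X ai) \<and> s \<noteq> 0
     \<and> e * cadj e = s' \<cdot>\<^sub>m 1\<^sub>m (dm X aj) \<and> e \<notin> qid X ai aj"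
proof -
  have pre: "qpreorder X T" and Tr: "is_qrel X X T" using T unfolding qequiv_def qpreorder_def by auto
  show ?thesis
  proof (cases "\<exists>a\<in>At X. \<exists>m\<in>T a a. \<forall>c. m \<noteq> c \<cdot>\<^sub>m 1\<^sub>m (dm X a)")
    case True
    then obtain a m where a: "a \<in> At X" and m: "m \<in> T a a" and ns: "\<forall>c. m \<noteq> c \<cdot>\<^sub>m 1\<^sub>m (dm X a)" by blast
    obtain e where e: "e \<in> T a a" and eh: "cadj e = e" and ee: "e * e = 1\<^sub>m (dm X a)"
      and ens: "\<forall>c. e \<noteq> c \<cdot>\<^sub>m 1\<^sub>m (dm X a)"
      using qequiv_diag_nonscalar_reflection[OF T a m ns] by blast
    have "e \<notin> qid X a a" using ens qid_same[OF a] by auto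
    moreover have "cadj e * e = 1 \<cdot>\<^sub>m 1\<^sub>m (dm X a)" "e * cadj e = 1 \<cdot>\<^sub>m 1\<^sub>m (dm X a)"
      unfolding eh ee by (rule one_scal)+
    moreover have "(1::complex) \<noteq> 0" by simp
    ultimately show ?thesis using a e by blast
  next
    case False
    then have scal: "\<And>a m. a \<in> At X \<Longrightarrow> m \<in> T a a \<Longrightarrow> \<exists>c. m = c \<cdot>\<^sub>m 1\<^sub>m (dm X a)" by blast
    from nle obtain a b m where m: "m \<in> T a b" and mq: "m \<notin> qid X a b" unfolding qle_def by blast
    have a: "a \<in> At X" and b: "b \<in> At X" and mc: "m \<in> carrier_mat (dm X b) (dm X a)"
      using qrel_mem[OF Tr m] by auto
    have ab: "a \<noteq> b"
    proof
      assume "a = b"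
      then obtain c where "m = c \<cdot>\<^sub>m 1\<^sub>m (dm X a)" using scal[OF a] m by blast
      then show False using mq \<open>a = b\<close> qid_same[OF a] by auto
    qed
    obtain s where s: "cadj m * m = s \<cdot>\<^sub>m 1\<^sub>m (dm X a)"
      using scal[OF a qpreorder_mult_mem[OF pre m qequiv_cadj_mem[OF T m]]] by blast
    obtain s' where s': "m * cadj m = s' \<cdot>\<^sub>m 1\<^sub>m (dm X b)"
      using scal[OF b qpreorder_mult_mem[OF pre qequiv_cadj_mem[OF T m] m]] by blast
    have s0: "s \<noteq> 0"
    proof
      assume "s = 0"
      then have "cadj m * m = 0\<^sub>m (dm X a) (dm X a)" using s by (simp add: zero_scal)
      then have "m = 0\<^sub>m (dm X b) (dm X a)" by (rule cadj_mult_self_zero[OF mc])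
      then show False using mq qid_diff[OF a b ab] by simp
    qed
    show ?thesis using a b m s s0 s' mq by blast
  qed
qed

definition atom_rel :: "'a qset \<Rightarrow> 'y \<Rightarrow> nat \<Rightarrow> 'a \<Rightarrow> complex mat \<Rightarrow> ('y,'a) qrel" where
  "atom_rel X y0 d b e = (\<lambda>y a. if y = y0 \<and> a \<in> At X
     then (if a = b then {c \<cdot>\<^sub>m e | c. True} else {0\<^sub>m (dm X a) d}) else {})"

definition atom_qset :: "'y \<Rightarrow> nat \<Rightarrow> 'y qset" where "atom_qset y0 d = ({y0}, \<lambda>_. d)"

lemma At_atom_qset[simp]: "At (atom_qset y0 d) = {y0}" unfolding atom_qset_def At_def by simp

lemma dm_atom_qset[simp]: "dm (atom_qset y0 d) y = d" unfolding atom_qset_def dm_def by simp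

lemma atom_rel_same: "a \<in> At X \<Longrightarrow> atom_rel X y0 d a e y0 a = {c \<cdot>\<^sub>m e | c. True}"
  unfolding atom_rel_def by simp

lemma atom_rel_diff: "a \<in> At X \<Longrightarrow> a \<noteq> b \<Longrightarrow> atom_rel X y0 d b e y0 a = {0\<^sub>m (dm X a) d}"
  unfolding atom_rel_def by simp

lemma is_qrel_atom_rel: assumes b: "b \<in> At X" and e: "e \<in> carrier_mat (dm X b) d"
  shows "is_qrel (atom_qset y0 d) X (atom_rel X y0 d b e)"
proof (rule qrelI)
  fix y a assume y: "y \<in> At (atom_qset y0 d)" and a: "a \<in> At X"
  then have yy: "y = y0" by simp
  show "mat_subspace (dm X a) (dm (atom_qset y0 d) y) (atom_rel X y0 d b e y a)"
  proof (cases "a = b")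
    case True show ?thesis unfolding yy True atom_rel_same[OF b] dm_atom_qset by (rule line_subspace[OF e])
  next
    case False show ?thesis unfolding yy atom_rel_diff[OF a False] dm_atom_qset by (rule zero_subspace)
  qed
next
  fix y a assume "\<not> (y \<in> At (atom_qset y0 d) \<and> a \<in> At X)"
  then show "atom_rel X y0 d b e y a = {}" unfolding atom_rel_def by auto
qed

lemma atom_rel_nonempty: "atom_rel X y0 d b e y a \<noteq> {} \<Longrightarrow> y = y0 \<and> a \<in> At X"
  unfolding atom_rel_def by (auto split: if_splits)

lemma atom_rel_comp_adj_le_qid:
  fixes e :: "complex mat"
  assumes b: "b \<in> At X" and e: "e \<in> carrier_mat (dm X b) d"
    and s': "e * cadj e = s' \<cdot>\<^sub>m 1\<^sub>m (dm X b)"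
  shows "qle (qcomp X (atom_qset y0 d) X (atom_rel X y0 d b e) (qadj (atom_rel X y0 d b e))) (qid X)"
proof -
  let ?Y = "atom_qset y0 d" and ?G = "atom_rel X y0 d b e"
  have G: "is_qrel ?Y X ?G" by (rule is_qrel_atom_rel[OF b e])
  show ?thesis
  proof (rule qcomp_leI[OF qid_rel])
    fix a c y r t assume a: "a \<in> At X" and c: "c \<in> At X" and y: "y \<in> At ?Y"
      and r: "r \<in> qadj ?G a y" and t: "t \<in> ?G y c"
    have yy: "y = y0" using y by simp
    obtain g where rg: "r = cadj g" and g: "g \<in> ?G y a" using r unfolding qadj_apply by blast
    have gc: "g \<in> carrier_mat (dm X a) d" using qrel_mem(3)[OF G g] by simp
    have tc: "t \<in> carrier_mat (dm X c) d" using qrel_mem(3)[OF G t] by simp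
    show "t * r \<in> qid X a c"
    proof (cases "a = b \<and> c = b")
      case True
      then obtain k1 k2 where g': "g = k1 \<cdot>\<^sub>m e" and t': "t = k2 \<cdot>\<^sub>m e"
        using g t yy a unfolding atom_rel_def by auto
      have "t * r = (k2 \<cdot>\<^sub>m e) * (cnj k1 \<cdot>\<^sub>m cadj e)" unfolding rg g' t' by simp
      also have "\<dots> = k2 \<cdot>\<^sub>m (e * (cnj k1 \<cdot>\<^sub>m cadj e))"
        by (rule mult_smult_assoc_mat[OF e smult_carrier_mat[OF cadj_carrier[OF e]]])
      also have "e * (cnj k1 \<cdot>\<^sub>m cadj e) = cnj k1 \<cdot>\<^sub>m (e * cadj e)"
        by (rule mult_smult_distrib[OF e cadj_carrier[OF e]])
      finally have "t * r = k2 \<cdot>\<^sub>m (cnj k1 \<cdot>\<^sub>m (s' \<cdot>\<^sub>m 1\<^sub>m (dm X b)))" unfolding s' .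
      also have "\<dots> = (k2 * cnj k1 * s') \<cdot>\<^sub>m 1\<^sub>m (dm X b)" by (intro eq_matI) auto
      finally have "t * r = (k2 * cnj k1 * s') \<cdot>\<^sub>m 1\<^sub>m (dm X b)" .
      then show ?thesis using True qid_same[OF b] by auto
    next
      case False
      then have "g = 0\<^sub>m (dm X a) d \<or> t = 0\<^sub>m (dm X c) d"
        using g t yy a c unfolding atom_rel_def by (auto split: if_splits)
      then have "t * r = 0\<^sub>m (dm X c) (dm X a)" unfolding rg using gc tc by auto
      then show ?thesis using zero_in_qid[OF a c] by simp
    qed
  qed
qed

lemma qid_le_adj_comp_atom_rel:
  fixes e :: "complex mat"
  assumes b: "b \<in> At X" and e: "e \<in> carrier_mat (dm X b) d"
    and s: "cadj e * e = s \<cdot>\<^sub>m 1\<^sub>m d" and s0: "s \<noteq> 0"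
  shows "qle (qid (atom_qset y0 d))
    (qcomp (atom_qset y0 d) X (atom_qset y0 d) (qadj (atom_rel X y0 d b e)) (atom_rel X y0 d b e))"
proof -
  let ?Y = "atom_qset y0 d" and ?G = "atom_rel X y0 d b e"
  have G: "is_qrel ?Y X ?G" by (rule is_qrel_atom_rel[OF b e])
  show ?thesis
    unfolding qle_def
  proof (intro allI subsetI)
    fix y y' x assume x: "x \<in> qid ?Y y y'"
    have yy: "y = y0" "y' = y0" using x qid_off[of y ?Y y'] by auto
    obtain k where xk: "x = k \<cdot>\<^sub>m 1\<^sub>m d" using x unfolding yy qid_same[of y0 ?Y, simplified] by auto
    have eG: "e \<in> ?G y0 b" unfolding atom_rel_def using b e by (auto intro!: exI[of _ 1])
    have "cadj e * e \<in> qcomp ?Y X ?Y (qadj ?G) ?G y0 y0"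
      by (rule qcomp_memI[OF G qadj_rel[OF G] eG qadj_mem[of e ?G y0 b, OF eG]])
    then have "(k / s) \<cdot>\<^sub>m (cadj e * e) \<in> qcomp ?Y X ?Y (qadj ?G) ?G y0 y0"
      by (rule qrel_smult[OF qcomp_rel[OF G qadj_rel[OF G]]])
    moreover have "(k / s) \<cdot>\<^sub>m (cadj e * e) = x" unfolding s xk using s0 by (intro eq_matI) auto
    ultimately show "x \<in> qcomp ?Y X ?Y (qadj ?G) ?G y y'" unfolding yy by simp
  qed
qed

lemma qfun_atom_rel: fixes e :: "complex mat"
  assumes b: "b \<in> At X" and e: "e \<in> carrier_mat (dm X b) d"
  and s: "cadj e * e = s \<cdot>\<^sub>m 1\<^sub>m d" and s0: "s \<noteq> 0" and s': "e * cadj e = s' \<cdot>\<^sub>m 1\<^sub>m (dm X b)"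
  shows "qfun (atom_qset y0 d) X (atom_rel X y0 d b e)"
  unfolding qfun_def
  by (intro conjI is_qrel_atom_rel[OF b e] atom_rel_comp_adj_le_qid[OF b e s']
      qid_le_adj_comp_atom_rel[OF b e s s0])

text \<open>The witnesses are two functions from a single atom of dimension dim ai: F includes it
  identically as ai, G maps it onto aj along e, so that G \<le> T F because e \<in> T(ai,aj).\<close>
lemma distinct_qfuns_of_scaled_unitary:
  assumes X: "qset X" and T: "is_qrel X X T" and ai: "ai \<in> At X" and aj: "aj \<in> At X"
    and eT: "e \<in> T ai aj" and s: "cadj e * e = s \<cdot>\<^sub>m 1\<^sub>m (dm X ai)" and s0: "s \<noteq> 0"
    and s': "e * cadj e = s' \<cdot>\<^sub>m 1\<^sub>m (dm X aj)" and eq: "e \<notin> qid X ai aj"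
  shows "\<exists>(Y :: 'y qset) F G. qset Y \<and> qfun Y X F \<and> qfun Y X G \<and> F \<noteq> G \<and> qle G (qcomp Y X X T F)"
proof -
  define y0 :: 'y where "y0 = undefined"
  define d where "d = dm X ai"
  define Y where "Y = atom_qset y0 d"
  define F where "F = atom_rel X y0 d ai (1\<^sub>m d)"
  define G where "G = atom_rel X y0 d aj e"
  have ec: "e \<in> carrier_mat (dm X aj) d" using qrel_mem(3)[OF T eT] unfolding d_def .
  have dpos: "0 < d" using X ai unfolding qset_def d_def by auto
  have QY: "qset Y" unfolding Y_def qset_def using dpos by simp
  have Ff: "qfun Y X F" unfolding Y_def F_def
    by (rule qfun_atom_rel[where b=ai and e="1\<^sub>m d" and s=1 and s'=1]) (auto simp: ai d_def one_scal[symmetric])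
  have Gf: "qfun Y X G" unfolding Y_def G_def
    by (rule qfun_atom_rel[OF aj ec _ s0 s']) (use s in \<open>simp add: d_def\<close>)
  have Fr: "is_qrel Y X F" by (rule qfunD(1)[OF Ff])
  have Fq: "F y0 aj = qid X ai aj"
    unfolding F_def atom_rel_def d_def using aj ai by (cases "aj = ai") (auto simp: qid_same qid_diff)
  have eG: "e \<in> G y0 aj" unfolding G_def atom_rel_def using aj by (auto intro!: exI[of _ 1] simp: ec)
  have FG: "F \<noteq> G" using eG eq Fq by auto
  have le: "qle G (qcomp Y X X T F)" unfolding qle_def
  proof (intro allI subsetI)
    fix y a x assume x: "x \<in> G y a"
    have yy: "y = y0" and a: "a \<in> At X" using atom_rel_nonempty[of X y0 d aj e y a] x unfolding G_def by auto
    have TF: "is_qrel Y X (qcomp Y X X T F)" by (rule qcomp_rel[OF Fr T])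
    show "x \<in> qcomp Y X X T F y a"
    proof (cases "a = aj")
      case True
      then obtain k where xk: "x = k \<cdot>\<^sub>m e" using x yy a unfolding G_def atom_rel_def by auto
      have oneF: "1\<^sub>m d \<in> F y0 ai" unfolding F_def atom_rel_def using ai by (auto intro!: exI[of _ 1])
      have "e * 1\<^sub>m d \<in> qcomp Y X X T F y0 aj" by (rule qcomp_memI[OF Fr T oneF eT])
      then have "e \<in> qcomp Y X X T F y0 aj" using ec by simp
      then show ?thesis unfolding xk yy True by (rule qrel_smult[OF TF])
    next
      case False
      then have "x = 0\<^sub>m (dm X a) d" using x yy a unfolding G_def atom_rel_def by auto
      moreover have "y0 \<in> At Y" unfolding Y_def by simp
      ultimately show ?thesis using qrel_zero[OF TF _ a, of y0] unfolding yy Y_def by simp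
    qed
  qed
  show ?thesis using QY Ff Gf FG le by blast
qed

lemma qequiv_le_qid:
  assumes X: "qset X" and T: "qequiv X T"
    and absorb: "\<And>(Y :: 'y qset) F G. qset Y \<Longrightarrow> qfun Y X F \<Longrightarrow> qfun Y X G
       \<Longrightarrow> qle G (qcomp Y X X T F) \<Longrightarrow> F = G"
  shows "qle T (qid X)"
proof (rule ccontr)
  assume nle: "\<not> qle T (qid X)"
  have Tr: "is_qrel X X T" using T unfolding qequiv_def qpreorder_def by auto
  obtain ai aj e s s' where "ai \<in> At X" "aj \<in> At X" "e \<in> T ai aj"
    "cadj e * e = s \<cdot>\<^sub>m 1\<^sub>m (dm X ai)" "s \<noteq> 0" "e * cadj e = s' \<cdot>\<^sub>m 1\<^sub>m (dm X aj)" "e \<notin> qid X ai aj"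
    using qequiv_scaled_unitary_off_qid[OF X T nle] by blast
  then obtain Y :: "'y qset" and F G where "qset Y" "qfun Y X F" "qfun Y X G" "F \<noteq> G" "qle G (qcomp Y X X T F)"
    using distinct_qfuns_of_scaled_unitary[OF X Tr] by metis
  with absorb show False by blast
qed

section \<open>Preorders pulled back along functions\<close>

definition qpullback :: "'a qset \<Rightarrow> 'b qset \<Rightarrow> ('a,'b) qrel \<Rightarrow> ('b,'b) qrel \<Rightarrow> ('a,'a) qrel" where
  "qpullback X Y J R = qcomp X Y X (qadj J) (qcomp X Y Y R J)"

lemma qpullback_rel: assumes J: "qfun X Y J" and R: "is_qrel Y Y R"
  shows "is_qrel X X (qpullback X Y J R)"
  unfolding qpullback_def using qcomp_rel[OF qcomp_rel[OF qfunD(1)[OF J] R] qadj_rel[OF qfunD(1)[OF J]]] .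

lemma qid_le_qpullback: assumes J: "qfun X Y J" and R: "is_qrel Y Y R" and refl: "qle (qid Y) R"
  shows "qle (qid X) (qpullback X Y J R)"
proof -
  note Jr = qfunD(1)[OF J]
  have "qle (qid X) (qcomp X Y X (qadj J) J)" by (rule qfunD(3)[OF J])
  also have "qcomp X Y X (qadj J) J = qcomp X Y X (qadj J) (qcomp X Y Y (qid Y) J)"
    using qcomp_id_left[OF Jr] by simp
  also have "qle \<dots> (qpullback X Y J R)"
    unfolding qpullback_def by (rule qcomp_mono[OF qcomp_mono[OF qle_refl refl] qle_refl])
  finally show ?thesis .
qed

lemma qcomp_qpullback_le: assumes J: "qfun X Y J" and R: "is_qrel Y Y R"
  and trans: "qle (qcomp Y Y Y R R) R"
  shows "qle (qcomp X X X (qpullback X Y J R) (qpullback X Y J R)) (qpullback X Y J R)"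
proof -
  note Jr = qfunD(1)[OF J]
  note Jd = qadj_rel[OF Jr]
  define A where "A = qcomp X Y Y R J"
  have Ar: "is_qrel X Y A" unfolding A_def by (rule qcomp_rel[OF Jr R])
  have TA: "qpullback X Y J R = qcomp X Y X (qadj J) A" unfolding qpullback_def A_def ..
  have "qcomp X X X (qpullback X Y J R) (qpullback X Y J R)
      = qcomp X Y X (qadj J) (qcomp X X Y A (qpullback X Y J R))"
    unfolding TA by (rule qcomp_assoc[OF qcomp_rel[OF Ar Jd] Ar Jd])
  also have "qle \<dots> (qcomp X Y X (qadj J) A)"
  proof (rule qcomp_mono[OF _ qle_refl])
    have "qcomp X X Y A (qpullback X Y J R) = qcomp X Y Y (qcomp Y X Y A (qadj J)) A"
      unfolding TA by (rule qcomp_assoc[OF Ar Jd Ar, symmetric])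
    also have "qle \<dots> (qcomp X Y Y R A)"
      by (rule qcomp_mono[OF qle_refl]) (unfold A_def, rule qfun_comp_adj_le[OF J R])
    also have "qcomp X Y Y R A = qcomp X Y Y (qcomp Y Y Y R R) J"
      unfolding A_def by (rule qcomp_assoc[OF Jr R R, symmetric])
    also have "qle \<dots> A" unfolding A_def by (rule qcomp_mono[OF qle_refl trans])
    finally show "qle (qcomp X X Y A (qpullback X Y J R)) A" .
  qed
  finally show ?thesis unfolding TA .
qed

lemma qpreorder_qpullback: assumes "qfun X Y J" and "qpreorder Y R"
  shows "qpreorder X (qpullback X Y J R)"
  using assms qpullback_rel qid_le_qpullback qcomp_qpullback_le unfolding qpreorder_def by blast

lemma qadj_qpullback: assumes J: "qfun X Y J" and R: "is_qrel Y Y R"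
  shows "qadj (qpullback X Y J R) = qpullback X Y J (qadj R)"
proof -
  note Jr = qfunD(1)[OF J]
  note Jd = qadj_rel[OF Jr]
  have A: "is_qrel X Y (qcomp X Y Y R J)" by (rule qcomp_rel[OF Jr R])
  have "qadj (qpullback X Y J R) = qcomp X Y X (qadj (qcomp X Y Y R J)) (qadj (qadj J))"
    unfolding qpullback_def by (rule qadj_comp[OF A Jd])
  also have "qadj (qcomp X Y Y R J) = qcomp Y Y X (qadj J) (qadj R)" by (rule qadj_comp[OF Jr R])
  also have "qcomp X Y X (qcomp Y Y X (qadj J) (qadj R)) (qadj (qadj J)) = qpullback X Y J (qadj R)"
    unfolding qpullback_def using qcomp_assoc[OF Jr qadj_rel[OF R] Jd] by simp
  finally show ?thesis .
qed

lemma qcomp_le_of_le_qpullback: assumes J: "qfun X Y J" and S: "is_qrel Y Y S"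
  and le: "qle R (qpullback X Y J S)"
  shows "qle (qcomp X X Y J R) (qcomp X Y Y S J)"
proof -
  have "qle (qcomp X X Y J R) (qcomp X X Y J (qpullback X Y J S))"
    by (rule qcomp_mono[OF le qle_refl])
  also have "qle \<dots> (qcomp X Y Y S J)" unfolding qpullback_def
    by (rule qfun_comp_comp_adj_le[OF J qcomp_rel[OF qfunD(1)[OF J] S]])
  finally show ?thesis .
qed

lemma qle_qpullback_of_qmono:
  assumes F: "qfun Y X F" and J: "qfun X Z J" and S: "is_qrel Y Y S" and R: "is_qrel Z Z R"
    and mono: "qle (qcomp Y Y Z (qcomp Y X Z J F) S) (qcomp Y Z Z R (qcomp Y X Z J F))"
  shows "qle (qcomp Y Y X F S) (qcomp Y X X (qpullback X Z J R) F)"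
proof -
  note Jr = qfunD(1)[OF J] and Fr = qfunD(1)[OF F]
  have W: "is_qrel Y X (qcomp Y Y X F S)" by (rule qcomp_rel[OF S Fr])
  have "qcomp Y Y X F S = qcomp Y X X (qid X) (qcomp Y Y X F S)" by (rule qcomp_id_left[OF W, symmetric])
  also have "qle \<dots> (qcomp Y X X (qcomp X Z X (qadj J) J) (qcomp Y Y X F S))"
    by (rule qcomp_mono[OF qle_refl qfunD(3)[OF J]])
  also have "\<dots> = qcomp Y Z X (qadj J) (qcomp Y X Z J (qcomp Y Y X F S))"
    by (rule qcomp_assoc[OF W Jr qadj_rel[OF Jr]])
  also have "qcomp Y X Z J (qcomp Y Y X F S) = qcomp Y Y Z (qcomp Y X Z J F) S"
    by (rule qcomp_assoc[OF S Fr Jr, symmetric])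
  also have "qle (qcomp Y Z X (qadj J) (qcomp Y Y Z (qcomp Y X Z J F) S))
                 (qcomp Y Z X (qadj J) (qcomp Y Z Z R (qcomp Y X Z J F)))"
    by (rule qcomp_mono[OF mono qle_refl])
  also have "qcomp Y Z Z R (qcomp Y X Z J F) = qcomp Y X Z (qcomp X Z Z R J) F"
    by (rule qcomp_assoc[OF Fr Jr R, symmetric])
  also have "qcomp Y Z X (qadj J) (qcomp Y X Z (qcomp X Z Z R J) F) = qcomp Y X X (qpullback X Z J R) F"
    unfolding qpullback_def by (rule qcomp_assoc[OF Fr qcomp_rel[OF Jr R] qadj_rel[OF Jr], symmetric])
  finally show ?thesis .
qed

lemma qcomp_qinf_qadj_le:
  assumes J: "qfun X Y J" and S: "qposet Y S" and R: "is_qrel X X R" and le: "qle R (qpullback X Y J S)"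
  shows "qle (qcomp X X Y J (qinf R (qadj R))) J"
proof -
  note Jr = qfunD(1)[OF J]
  have Sr: "is_qrel Y Y S" and anti: "qle (qinf S (qadj S)) (qid Y)" using S unfolding qposet_def by auto
  have W: "is_qrel X Y (qcomp X X Y J (qinf R (qadj R)))" by (rule qcomp_rel[OF qinf_rel[OF R qadj_rel[OF R]] Jr])
  have le1: "qle (qcomp X X Y J (qinf R (qadj R))) (qcomp X Y Y S J)"
    using qle_trans[OF qcomp_mono[OF qinf_le1 qle_refl] qcomp_le_of_le_qpullback[OF J Sr le]] .
  have "qle (qinf R (qadj R)) (qpullback X Y J (qadj S))"
    using qle_trans[OF qinf_le2 qadj_mono[OF le]] unfolding qadj_qpullback[OF J Sr] .
  then have "qle (qcomp X X Y J (qinf R (qadj R))) (qcomp X Y Y (qadj S) J)"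
    by (rule qcomp_le_of_le_qpullback[OF J qadj_rel[OF Sr]])
  then have "qle (qcomp X X Y J (qinf R (qadj R))) (qcomp X Y Y (qinf S (qadj S)) J)"
    by (rule qfun_le_comp_qinf[OF J W Sr qadj_rel[OF Sr] le1])
  also have "qle \<dots> (qcomp X Y Y (qid Y) J)" by (rule qcomp_mono[OF qle_refl anti])
  also have "qcomp X Y Y (qid Y) J = J" by (rule qcomp_id_left[OF Jr])
  finally show ?thesis .
qed

lemma qmono_into_qMeet_qpullback:
  assumes F: "qfun Y X F" and S: "is_qrel Y Y S"
    and J: "\<And>i. i \<in> I \<Longrightarrow> qfun X (Z i) (J i)" and R: "\<And>i. i \<in> I \<Longrightarrow> is_qrel (Z i) (Z i) (R i)"
    and mono: "\<And>i. i \<in> I \<Longrightarrow> qmono Y S (Z i) (R i) (qcomp Y X (Z i) (J i) F)"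
  shows "qmono Y S X (qMeet X X I (\<lambda>i. qpullback X (Z i) (J i) (R i))) F"
  unfolding qmono_def
proof (intro conjI F qfun_le_comp_qMeet[OF F qcomp_rel[OF S qfunD(1)[OF F]]])
  fix i assume i: "i \<in> I"
  show "is_qrel X X (qpullback X (Z i) (J i) (R i))" by (rule qpullback_rel[OF J[OF i] R[OF i]])
  show "qle (qcomp Y Y X F S) (qcomp Y X X (qpullback X (Z i) (J i) (R i)) F)"
    using qle_qpullback_of_qmono[OF F J[OF i] S R[OF i]] mono[OF i] unfolding qmono_def by blast
qed

section \<open>Limits\<close>

lemma qset_limitD:
  assumes "qset_limit TYPE('y) Ob Ar src tgt DX DF X J"
  shows "qset X" and "\<And>x. x \<in> Ob \<Longrightarrow> qfun X (DX x) (J x)"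
    and "\<And>f. f \<in> Ar \<Longrightarrow> qcomp X (DX (src f)) (DX (tgt f)) (DF f) (J (src f)) = J (tgt f)"
    and "\<And>(Y :: 'y qset) K. qset Y \<Longrightarrow> qset_cone Ob Ar src tgt DX DF Y K \<Longrightarrow>
           \<exists>!F. qfun Y X F \<and> (\<forall>x\<in>Ob. qcomp Y X (DX x) (J x) F = K x)"
  using assms unfolding qset_limit_def qset_cone_def by blast+

lemma qset_limit_jointly_monic:
  fixes Y :: "'y qset"
  assumes lim: "qset_limit TYPE('y) Ob Ar src tgt DX DF X J"
    and DF: "\<And>f. f \<in> Ar \<Longrightarrow> src f \<in> Ob \<and> is_qrel (DX (src f)) (DX (tgt f)) (DF f)"
    and Y: "qset Y" and F: "qfun Y X F" and G: "qfun Y X G"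
    and eq: "\<And>x. x \<in> Ob \<Longrightarrow> qcomp Y X (DX x) (J x) F = qcomp Y X (DX x) (J x) G"
  shows "F = G"
proof -
  have Jf: "\<And>x. x \<in> Ob \<Longrightarrow> qfun X (DX x) (J x)"
    and Jcone: "\<And>f. f \<in> Ar \<Longrightarrow> qcomp X (DX (src f)) (DX (tgt f)) (DF f) (J (src f)) = J (tgt f)"
    using qset_limitD[OF lim] by blast+
  define K where "K = (\<lambda>x. qcomp Y X (DX x) (J x) F)"
  have "qset_cone Ob Ar src tgt DX DF Y K"
    unfolding qset_cone_def
  proof (intro conjI ballI)
    fix x assume x: "x \<in> Ob"
    show "qfun Y (DX x) (K x)" unfolding K_def by (rule qfun_comp[OF F Jf[OF x]])
  next
    fix f assume f: "f \<in> Ar"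
    have "qcomp Y (DX (src f)) (DX (tgt f)) (DF f) (qcomp Y X (DX (src f)) (J (src f)) F)
        = qcomp Y X (DX (tgt f)) (qcomp X (DX (src f)) (DX (tgt f)) (DF f) (J (src f))) F"
      using qcomp_assoc[OF qfunD(1)[OF F] qfunD(1)[OF Jf] conjunct2[OF DF[OF f]]] DF[OF f] by simp
    then show "qcomp Y (DX (src f)) (DX (tgt f)) (DF f) (K (src f)) = K (tgt f)"
      unfolding K_def Jcone[OF f] .
  qed
  then have "\<exists>!H. qfun Y X H \<and> (\<forall>x\<in>Ob. qcomp Y X (DX x) (J x) H = K x)"
    by (rule qset_limitD(4)[OF lim Y])
  moreover have "\<forall>x\<in>Ob. qcomp Y X (DX x) (J x) F = K x" "\<forall>x\<in>Ob. qcomp Y X (DX x) (J x) G = K x"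
    using eq unfolding K_def by simp_all
  ultimately show "F = G" using F G by blast
qed

lemma qset_limit_meet_antisym:
  assumes lim: "qset_limit TYPE('y) Ob Ar src tgt DX DF X J"
    and DF: "\<And>f. f \<in> Ar \<Longrightarrow> src f \<in> Ob \<and> is_qrel (DX (src f)) (DX (tgt f)) (DF f)"
    and pos: "\<And>x. x \<in> Ob \<Longrightarrow> qposet (DX x) (DR x)"
    and R: "qpreorder X R" and le: "\<And>x. x \<in> Ob \<Longrightarrow> qle R (qpullback X (DX x) (J x) (DR x))"
  shows "qle (qinf R (qadj R)) (qid X)"
proof -
  have QX: "qset X" and Jf: "\<And>x. x \<in> Ob \<Longrightarrow> qfun X (DX x) (J x)"
    using qset_limitD[OF lim] by blast+
  have Rr: "is_qrel X X R" using R unfolding qpreorder_def by blast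
  define T where "T = qinf R (qadj R)"
  have T: "qequiv X T" unfolding T_def by (rule qequiv_qinf_qadj[OF R])
  then have Tr: "is_qrel X X T" unfolding qequiv_def qpreorder_def by blast
  show ?thesis unfolding T_def[symmetric]
  proof (rule qequiv_le_qid[OF QX T])
    fix Y :: "'y qset" and F G
    assume Y: "qset Y" and F: "qfun Y X F" and G: "qfun Y X G" and GTF: "qle G (qcomp Y X X T F)"
    show "F = G"
    proof (rule qset_limit_jointly_monic[OF lim DF Y F G])
      fix x assume x: "x \<in> Ob"
      note Jr = qfunD(1)[OF Jf[OF x]]
      have "qle (qcomp Y X (DX x) (J x) G) (qcomp Y X (DX x) (J x) (qcomp Y X X T F))"
        by (rule qcomp_mono[OF GTF qle_refl])
      also have "\<dots> = qcomp Y X (DX x) (qcomp X X (DX x) (J x) T) F"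
        by (rule qcomp_assoc[OF qfunD(1)[OF F] Tr Jr, symmetric])
      also have "qle \<dots> (qcomp Y X (DX x) (J x) F)"
        unfolding T_def by (rule qcomp_mono[OF qle_refl qcomp_qinf_qadj_le[OF Jf[OF x] pos[OF x] Rr le[OF x]]])
      finally show "qcomp Y X (DX x) (J x) F = qcomp Y X (DX x) (J x) G"
        by (rule qfun_le_imp_eq[OF qfun_comp[OF G Jf[OF x]] qfun_comp[OF F Jf[OF x]], symmetric])
    qed
  qed
qed

lemma qposet_meet_of_pullbacks:
  assumes lim: "qset_limit TYPE('y) Ob Ar src tgt DX DF X J"
    and DF: "\<And>f. f \<in> Ar \<Longrightarrow> src f \<in> Ob \<and> is_qrel (DX (src f)) (DX (tgt f)) (DF f)"
    and pos: "\<And>x. x \<in> Ob \<Longrightarrow> qposet (DX x) (DR x)"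
  shows "qposet X (qMeet X X Ob (\<lambda>x. qpullback X (DX x) (J x) (DR x)))"
proof -
  define R where "R = qMeet X X Ob (\<lambda>x. qpullback X (DX x) (J x) (DR x))"
  have le: "\<And>x. x \<in> Ob \<Longrightarrow> qle R (qpullback X (DX x) (J x) (DR x))" unfolding R_def by (rule qMeet_le)
  have pre: "qpreorder X R" unfolding R_def
  proof (rule qpreorder_qMeet)
    fix x assume "x \<in> Ob"
    then show "qpreorder X (qpullback X (DX x) (J x) (DR x))"
      using qpreorder_qpullback[OF qset_limitD(2)[OF lim]] pos unfolding qposet_iff_qpreorder by blast
  qed
  show ?thesis unfolding R_def[symmetric] qposet_iff_qpreorder
    using qset_limitD(1)[OF lim] pre qset_limit_meet_antisym[OF lim DF pos pre le] by blast
qed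

lemma qpos_cone_of_qset_limit:
  assumes lim: "qset_limit TYPE('y) Ob Ar src tgt DX DF X J"
    and pos: "\<And>x. x \<in> Ob \<Longrightarrow> qposet (DX x) (DR x)"
  shows "qpos_cone Ob Ar src tgt DX DR DF X (qMeet X X Ob (\<lambda>x. qpullback X (DX x) (J x) (DR x))) J"
proof -
  note Jf = qset_limitD(2)[OF lim]
  have "qle (qcomp X X (DX x) (J x) (qMeet X X Ob (\<lambda>x. qpullback X (DX x) (J x) (DR x))))
            (qcomp X (DX x) (DX x) (DR x) (J x))" if x: "x \<in> Ob" for x
    using qcomp_le_of_le_qpullback[OF Jf[OF x] _ qMeet_le[of x Ob X X "\<lambda>x. qpullback X (DX x) (J x) (DR x)", OF x]]
      pos[OF x] unfolding qposet_def by blast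
  then show ?thesis
    using Jf qset_limitD(3)[OF lim] unfolding qpos_cone_def qmono_def by blast
qed

lemma qpos_cone_factors_uniquely:
  fixes Y :: "'y qset"
  assumes lim: "qset_limit TYPE('y) Ob Ar src tgt DX DF X J"
    and pos: "\<And>x. x \<in> Ob \<Longrightarrow> qposet (DX x) (DR x)"
    and Y: "qposet Y S" and K: "qpos_cone Ob Ar src tgt DX DR DF Y S K"
  shows "\<exists>!F. qmono Y S X (qMeet X X Ob (\<lambda>x. qpullback X (DX x) (J x) (DR x))) F
           \<and> (\<forall>x\<in>Ob. qcomp Y X (DX x) (J x) F = K x)"
proof -
  have "qset_cone Ob Ar src tgt DX DF Y K"
    using K unfolding qpos_cone_def qset_cone_def qmono_def by blast
  then obtain F where F: "qfun Y X F" and FK: "\<forall>x\<in>Ob. qcomp Y X (DX x) (J x) F = K x"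
    and unique: "\<And>F'. qfun Y X F' \<Longrightarrow> \<forall>x\<in>Ob. qcomp Y X (DX x) (J x) F' = K x \<Longrightarrow> F' = F"
    using qset_limitD(4)[OF lim] Y unfolding qposet_def by metis
  have "qmono Y S X (qMeet X X Ob (\<lambda>x. qpullback X (DX x) (J x) (DR x))) F"
  proof (rule qmono_into_qMeet_qpullback[OF F _ qset_limitD(2)[OF lim]])
    show "is_qrel Y Y S" using Y unfolding qposet_def by blast
    fix x assume x: "x \<in> Ob"
    show "is_qrel (DX x) (DX x) (DR x)" using pos[OF x] unfolding qposet_def by blast
    show "qmono Y S (DX x) (DR x) (qcomp Y X (DX x) (J x) F)"
      using K FK x unfolding qpos_cone_def by simp
  qed
  then show ?thesis using FK unique unfolding qmono_def by blast
qed

theorem mainTheorem4: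
  fixes Ob :: "'o set" and Ar :: "'m set" and src tgt :: "'m \<Rightarrow> 'o"
    and cmp :: "'m \<Rightarrow> 'm \<Rightarrow> 'm" and idA :: "'o \<Rightarrow> 'm"
    and DX :: "'o \<Rightarrow> 'b qset" and DR :: "'o \<Rightarrow> ('b,'b) qrel" and DF :: "'m \<Rightarrow> ('b,'b) qrel"
    and X :: "'x qset" and J :: "'o \<Rightarrow> ('x,'b) qrel"
  assumes "small_category Ob Ar src tgt cmp idA"
    and "qpos_diagram Ob Ar src tgt cmp idA DX DR DF"
    and "qset_limit TYPE('y) Ob Ar src tgt DX DF X J"
  shows "let R = qMeet X X Ob (\<lambda>x. qcomp X (DX x) X (qadj (J x))
                      (qcomp X (DX x) (DX x) (DR x) (J x)))
         in qposet X R \<and> qpos_limit TYPE('y) Ob Ar src tgt DX DR DF X R J"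
proof -
  note lim = assms(3)
  have DF: "\<And>f. f \<in> Ar \<Longrightarrow> src f \<in> Ob \<and> is_qrel (DX (src f)) (DX (tgt f)) (DF f)"
    using assms(1,2) unfolding small_category_def qpos_diagram_def qmono_def qfun_def by blast
  have pos: "\<And>x. x \<in> Ob \<Longrightarrow> qposet (DX x) (DR x)" using assms(2) unfolding qpos_diagram_def by blast
  define R where "R = qMeet X X Ob (\<lambda>x. qpullback X (DX x) (J x) (DR x))"
  have posX: "qposet X R" unfolding R_def by (rule qposet_meet_of_pullbacks[OF lim DF pos])
  moreover have "qpos_limit TYPE('y) Ob Ar src tgt DX DR DF X R J"
    unfolding qpos_limit_def
    using posX qpos_cone_of_qset_limit[OF lim pos] qpos_cone_factors_uniquely[OF lim pos]
    unfolding R_def by blast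
  ultimately show ?thesis unfolding Let_def R_def qpullback_def by (rule conjI)
qed

end
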